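(* Assume (K1) and (K2). For every $x\in\mathbb R^d$ at which $\lambda_i(x)\ne\lambda_j(x)$ for all $i\in\{r+1,\dots,d\}$, $j\in\{1,\dots,r\}$, $$\lambda_{\min}(\Sigma(x))\ \ge\ \frac{\lambda_{\min}(\mathbf R)}{2\,\lambda_{\max}(D^+(D^+)^T)}\ \min_{i\in\{r+1,\dots,d\}}\ \sum_{j=1}^r\Big[\frac{v_j(x)^T\nabla f(x)}{\lambda_i(x)-\lambda_j(x)}\Big]^2,$$ and $\lambda_{\min}(\mathbf R)>0$.
   Context: Let $d\ge2$, $1\le r\le d-1$. $f$ is a twice differentiable probability density on $\mathbb R^d$; $\lambda_1(x)\ge\dots\ge\lambda_d(x)$ are eigenvalues of $\nabla^2f(x)$ with orthonormal eigenvectors $v_1(x),\dots,v_d(x)$. For symmetric $d\times d$ $A$, $\mathrm{vech}(A)\in\mathbb R^{d(d+1)/2}$ stacks the lower-triangular part (with diagonal), $\mathrm{vec}(A)\in\mathbb R^{d^2}$ stacks the columns, and $D$ is the $d^2\times d(d+1)/2$ duplication matrix with $\mathrm{vec}(A)=D\,\mathrm{vech}(A)$; $D^+$ is its Moore–Penrose pseudoinverse. $d^2K=\mathrm{vech}(\nabla^2K)$, $\mathbf R=\int_{\mathbb R^d}d^2K(u)d^2K(u)^Tdu$. $\otimes$ is the Kronecker product. For $i=r+1,\dots,d$, $m_i(x)=D^T\big(v_i(x)\otimes\sum_{j=1}^r\frac{v_j(x)^T\nabla f(x)}{\lambda_i(x)-\lambda_j(x)}v_j(x)\big)$, $M(x)=(m_{r+1}(x),\dots,m_d(x))$,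 $\Sigma(x)=M(x)^T\mathbf RM(x)$. $\lambda_{\min},\lambda_{\max}$ denote smallest/largest eigenvalues of a symmetric matrix. (K1) $K$ is a spherically symmetric probability density supported on the closed unit ball with continuous partial derivatives up to order 4. (K2) For every open ball $S$ of positive radius in the unit ball, the components of $\mathbf 1_S\,d^2K$ are linearly independent. *)

theory Defs
  imports "HOL-Analysis.Analysis" "Jordan_Normal_Form.Char_Poly"
begin

section \<open>Coordinates of R^d (d = CARD('n)) as indices 0..d-1\<close>

definition coord :: "nat \<Rightarrow> 'n::finite" where
  "coord = (SOME e. bij_betw e {..<CARD('n)} (UNIV :: 'n set))"

definition to_jvec :: "real^'n::finite \<Rightarrow> real Matrix.vec" where
  "to_jvec y = Matrix.vec CARD('n) (\<lambda>k. vec_nth y (coord k))"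

definition to_jmat :: "real^'n::finite^'n \<Rightarrow> real mat" where
  "to_jmat A = Matrix.mat CARD('n) CARD('n) (\<lambda>(i,j). vec_nth (vec_nth A (coord i)) (coord j))"

text \<open>Lower-triangular index pairs (row, column), stacked column by column.\<close>
definition vech_pairs :: "nat \<Rightarrow> (nat \<times> nat) list" where
  "vech_pairs d = concat (map (\<lambda>j. map (\<lambda>i. (i, j)) [j..<d]) [0..<d])"

definition vech_mat :: "real mat \<Rightarrow> real Matrix.vec" where
  "vech_mat A = Matrix.vec (length (vech_pairs (dim_row A))) (\<lambda>k. A $$ (vech_pairs (dim_row A) ! k))"

definition vec_mat :: "real mat \<Rightarrow> real Matrix.vec" where
  "vec_mat A = Matrix.vec (dim_row A * dim_col A) (\<lambda>k. A $$ (k mod dim_row A, k div dim_row A))"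

definition dup_mat :: "nat \<Rightarrow> real mat" where
  "dup_mat d = (THE D. D \<in> carrier_mat (d * d) (d * (d + 1) div 2) \<and>
      (\<forall>A \<in> carrier_mat d d. transpose_mat A = A \<longrightarrow> vec_mat A = D *\<^sub>v vech_mat A))"

definition pinv :: "real mat \<Rightarrow> real mat" where
  "pinv A = (THE X. X \<in> carrier_mat (dim_col A) (dim_row A) \<and> A * X * A = A \<and> X * A * X = X \<and>
      transpose_mat (A * X) = A * X \<and> transpose_mat (X * A) = X * A)"

definition kron_vec :: "real Matrix.vec \<Rightarrow> real Matrix.vec \<Rightarrow> real Matrix.vec" where
  "kron_vec a b = Matrix.vec (dim_vec a * dim_vec b) (\<lambda>k. vec_index a (k div dim_vec b) * vec_index b (k mod dim_vec b))"

definition lam_min :: "real mat \<Rightarrow> real" where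
  "lam_min A = Min {k. eigenvalue A k}"

definition lam_max :: "real mat \<Rightarrow> real" where
  "lam_max A = Max {k. eigenvalue A k}"

definition has_partial :: "'n \<Rightarrow> (real^'n::finite \<Rightarrow> real) \<Rightarrow> real^'n \<Rightarrow> bool" where
  "has_partial i g y = ((\<lambda>t. g (y + t *\<^sub>R axis i 1)) differentiable (at 0))"

definition partial_deriv :: "'n \<Rightarrow> (real^'n::finite \<Rightarrow> real) \<Rightarrow> real^'n \<Rightarrow> real" where
  "partial_deriv i g y = deriv (\<lambda>t. g (y + t *\<^sub>R axis i 1)) 0"

fun Ck :: "nat \<Rightarrow> (real^'n::finite \<Rightarrow> real) \<Rightarrow> bool" where
  "Ck 0 g = continuous_on UNIV g"
| "Ck (Suc k) g = (continuous_on UNIV g \<and> (\<forall>i y. has_partial i g y) \<and> (\<forall>i. Ck k (partial_deriv i g)))"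

definition hessK :: "(real^'n::finite \<Rightarrow> real) \<Rightarrow> real^'n \<Rightarrow> real^'n^'n" where
  "hessK K u = (\<chi> i j. partial_deriv i (partial_deriv j K) u)"

definition d2K :: "(real^'n::finite \<Rightarrow> real) \<Rightarrow> real^'n \<Rightarrow> real Matrix.vec" where
  "d2K K u = vech_mat (to_jmat (hessK K u))"

definition R_mat :: "(real^'n::finite \<Rightarrow> real) \<Rightarrow> real mat" where
  "R_mat K = Matrix.mat (CARD('n) * (CARD('n) + 1) div 2) (CARD('n) * (CARD('n) + 1) div 2)
     (\<lambda>(k, l). \<integral>u. vec_index (d2K K u) k * vec_index (d2K K u) l \<partial>lborel)"

text \<open>Eigenvalues lam 1..d and eigenvectors v 1..d (indices 1..d as in the paper), gradient gx.\<close>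
definition m_vec :: "nat \<Rightarrow> (nat \<Rightarrow> real) \<Rightarrow> (nat \<Rightarrow> real^'n::finite) \<Rightarrow> real^'n \<Rightarrow> nat \<Rightarrow> real Matrix.vec" where
  "m_vec r lam v gx i = transpose_mat (dup_mat CARD('n)) *\<^sub>v
     kron_vec (to_jvec (v i)) (to_jvec (\<Sum>j\<in>{1..r}. ((v j \<bullet> gx) / (lam i - lam j)) *\<^sub>R v j))"

definition M_mat :: "nat \<Rightarrow> (nat \<Rightarrow> real) \<Rightarrow> (nat \<Rightarrow> real^'n::finite) \<Rightarrow> real^'n \<Rightarrow> real mat" where
  "M_mat r lam v gx = Matrix.mat (CARD('n) * (CARD('n) + 1) div 2) (CARD('n) - r)
     (\<lambda>(k, l). vec_index (m_vec r lam v gx (r + 1 + l)) k)"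

definition Sigma_mat :: "(real^'n::finite \<Rightarrow> real) \<Rightarrow> nat \<Rightarrow> (nat \<Rightarrow> real) \<Rightarrow> (nat \<Rightarrow> real^'n) \<Rightarrow> real^'n \<Rightarrow> real mat" where
  "Sigma_mat K r lam v gx = transpose_mat (M_mat r lam v gx) * R_mat K * M_mat r lam v gx"

end

theory Submission
  imports Defs
begin

text \<open>
  Since \<open>\<Sigma> = M\<^sup>T R M\<close>, the Rayleigh quotient of \<open>\<Sigma>\<close> at \<open>y\<close> is at least
  \<open>\<lambda>\<^sub>m\<^sub>i\<^sub>n(R) |M y|\<^sup>2\<close>. Writing \<open>w\<^sub>i = \<Sum>\<^sub>j\<^sub>\<le>\<^sub>r (v\<^sub>j\<^sup>T\<nabla>f)/(\<lambda>\<^sub>i - \<lambda>\<^sub>j) v\<^sub>j\<close>, one has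
  \<open>M y = D\<^sup>T vec B\<close> with \<open>B = \<Sum>\<^sub>i y\<^sub>i w\<^sub>i v\<^sub>i\<^sup>T\<close>. A coordinate of \<open>D\<^sup>T vec B\<close> is \<open>B\<^sub>i\<^sub>i\<close> or \<open>B\<^sub>i\<^sub>j + B\<^sub>j\<^sub>i\<close>,
  so \<open>|M y|\<^sup>2 \<ge> \<parallel>(B + B\<^sup>T)/2\<parallel>\<^sup>2\<close> (Frobenius norm). The \<open>w\<^sub>i\<close> lie in the span of \<open>v\<^sub>1,\<dots>,v\<^sub>r\<close>,
  which is orthogonal to the \<open>v\<^sub>i\<close> with \<open>i > r\<close>; hence \<open>tr(B\<^sup>2) = 0\<close> and
  \<open>\<parallel>(B + B\<^sup>T)/2\<parallel>\<^sup>2 = \<Sum>\<^sub>i y\<^sub>i\<^sup>2 |w\<^sub>i|\<^sup>2 / 2 \<ge> min\<^sub>i |w\<^sub>i|\<^sup>2 |y|\<^sup>2 / 2\<close>. This gives the bound with the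
  factor \<open>1/2\<close>, which is at least the stated one because \<open>D\<^sup>+ (D\<^sup>+)\<^sup>T\<close> is diagonal with entries
  \<open>1\<close> and \<open>1/2\<close>.

  \<open>R\<close> is the Gram matrix of the components of \<open>d\<^sup>2K\<close>, which are continuous and vanish outside the
  unit ball; a vector in the kernel of the quadratic form would give a vanishing linear combination of
  them on the unit ball, which (K2) excludes. Hence \<open>\<lambda>\<^sub>m\<^sub>i\<^sub>n(R) > 0\<close>.
\<close>

unbundle no vec_syntax \<comment> \<open>frees \<open>$\<close> for indexing \<open>Matrix.vec\<close>\<close>

lemma index_mult_mat_sum:
  "A \<in> carrier_mat n m \<Longrightarrow> B \<in> carrier_mat m l \<Longrightarrow> i < n \<Longrightarrow> j < l \<Longrightarrow>
   (A * B) $$ (i, j) = (\<Sum>k<m. A $$ (i, k) * B $$ (k, j))"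
  by (auto simp: scalar_prod_def lessThan_atLeast0 intro!: sum.cong)

lemma index_mult_mat_vec_sum:
  "A \<in> carrier_mat n m \<Longrightarrow> x \<in> carrier_vec m \<Longrightarrow> i < n \<Longrightarrow>
   (A *\<^sub>v x) $ i = (\<Sum>k<m. A $$ (i, k) * x $ k)"
  by (auto simp: scalar_prod_def lessThan_atLeast0 intro!: sum.cong)

lemma scalar_prod_sum:
  "x \<in> carrier_vec m \<Longrightarrow> y \<in> carrier_vec m \<Longrightarrow> x \<bullet> y = (\<Sum>k<m. x $ k * y $ k)"
  by (auto simp: scalar_prod_def lessThan_atLeast0)

lemma scalar_prod_self_sum:
  "(x :: real Matrix.vec) \<in> carrier_vec m \<Longrightarrow> x \<bullet> x = (\<Sum>k<m. (x $ k)\<^sup>2)"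
  by (simp add: scalar_prod_sum power2_eq_square)

lemma scalar_prod_self_pos:
  "(x :: real Matrix.vec) \<in> carrier_vec m \<Longrightarrow> x \<noteq> 0\<^sub>v m \<Longrightarrow> 0 < x \<bullet> x"
  using conjugate_square_greater_0_vec[of x m] by simp

lemma quadratic_form_sum:
  assumes "A \<in> carrier_mat m m" and "x \<in> carrier_vec m"
  shows "x \<bullet> (A *\<^sub>v x) = (\<Sum>i<m. \<Sum>j<m. x $ i * A $$ (i, j) * x $ j)"
  using assms by (simp add: scalar_prod_sum[of _ m] index_mult_mat_vec_sum sum_distrib_left mult.assoc)

lemma quadratic_form_congruence:
  fixes M R :: "'a::comm_ring_1 mat"
  assumes M: "M \<in> carrier_mat N n" and R: "R \<in> carrier_mat N N" and y: "y \<in> carrier_vec n"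
  shows "y \<bullet> ((transpose_mat M * R * M) *\<^sub>v y) = (M *\<^sub>v y) \<bullet> (R *\<^sub>v (M *\<^sub>v y))"
proof -
  have Mt: "transpose_mat M \<in> carrier_mat n N" using M by simp
  have MtR: "transpose_mat M * R \<in> carrier_mat n N" using Mt R by simp
  have My: "M *\<^sub>v y \<in> carrier_vec N" using M y by simp
  have RMy: "R *\<^sub>v (M *\<^sub>v y) \<in> carrier_vec N" using R My by simp
  have "(transpose_mat M * R * M) *\<^sub>v y = (transpose_mat M * R) *\<^sub>v (M *\<^sub>v y)"
    by (rule assoc_mult_mat_vec[OF MtR M y])
  also have "\<dots> = transpose_mat M *\<^sub>v (R *\<^sub>v (M *\<^sub>v y))"
    by (rule assoc_mult_mat_vec[OF Mt R My])
  finally have "y \<bullet> ((transpose_mat M * R * M) *\<^sub>v y) = (transpose_mat M *\<^sub>v (R *\<^sub>v (M *\<^sub>v y))) \<bullet> y"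
    using Mt RMy y by (simp add: comm_scalar_prod[OF y])
  also have "\<dots> = (R *\<^sub>v (M *\<^sub>v y)) \<bullet> (M *\<^sub>v y)"
    by (rule transpose_vec_mult_scalar[OF M y RMy])
  also have "\<dots> = (M *\<^sub>v y) \<bullet> (R *\<^sub>v (M *\<^sub>v y))"
    by (rule comm_scalar_prod[OF RMy My])
  finally show ?thesis .
qed

lemma transpose_congruence_symmetric:
  fixes M R :: "'a::comm_ring_1 mat"
  assumes M: "M \<in> carrier_mat N n" and R: "R \<in> carrier_mat N N" and sym: "transpose_mat R = R"
  shows "transpose_mat (transpose_mat M * R * M) = transpose_mat M * R * M"
proof -
  have Mt: "transpose_mat M \<in> carrier_mat n N" using M by simp
  have MtR: "transpose_mat M * R \<in> carrier_mat n N" using Mt R by simp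
  have "transpose_mat (transpose_mat M * R * M) = transpose_mat M * transpose_mat (transpose_mat M * R)"
    by (rule transpose_mult[OF MtR M])
  also have "transpose_mat (transpose_mat M * R) = R * M"
    using transpose_mult[OF Mt R] sym by simp
  also have "transpose_mat M * (R * M) = transpose_mat M * R * M"
    by (rule assoc_mult_mat[symmetric, OF Mt R M])
  finally show ?thesis .
qed

lemma finite_eigenvalues: "(A :: 'a :: field mat) \<in> carrier_mat n n \<Longrightarrow> finite {k. eigenvalue A k}"
  using degree_monic_char_poly[of A n] poly_roots_finite[of "char_poly A"] eigenvalue_root_char_poly[of A n]
  by fastforce

lemma eigenvalueE:
  assumes "A \<in> carrier_mat n n" and "eigenvalue A k"
  obtains v where "v \<in> carrier_vec n" "v \<noteq> 0\<^sub>v n" "A *\<^sub>v v = k \<cdot>\<^sub>v v"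
  using assms unfolding eigenvalue_def eigenvector_def by auto

lemma moore_penrose_unique:
  fixes A X Y :: "'a :: comm_ring_1 mat"
  assumes A: "A \<in> carrier_mat m n" and X: "X \<in> carrier_mat n m" and Y: "Y \<in> carrier_mat n m"
    and X1: "A * X * A = A" and X2: "X * A * X = X"
    and X3: "transpose_mat (A * X) = A * X" and X4: "transpose_mat (X * A) = X * A"
    and Y1: "A * Y * A = A" and Y2: "Y * A * Y = Y"
    and Y3: "transpose_mat (A * Y) = A * Y" and Y4: "transpose_mat (Y * A) = Y * A"
  shows "X = Y"
proof -
  have AX: "A * X \<in> carrier_mat m m" and AY: "A * Y \<in> carrier_mat m m"
    and XA: "X * A \<in> carrier_mat n n" and YA: "Y * A \<in> carrier_mat n n"
    and At: "transpose_mat A \<in> carrier_mat n m" and Xt: "transpose_mat X \<in> carrier_mat m n"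
    using A X Y by auto
  have AX_AY: "A * X = A * Y"
  proof -
    have At_AY: "transpose_mat A = transpose_mat A * (A * Y)"
      using arg_cong[OF Y1, of transpose_mat] transpose_mult[OF AY A] Y3 by simp
    have "A * X = transpose_mat X * transpose_mat A"
      using transpose_mult[OF A X] X3 by simp
    also have "\<dots> = (transpose_mat X * transpose_mat A) * (A * Y)"
      by (subst At_AY) (rule assoc_mult_mat[symmetric, OF Xt At AY])
    also have "\<dots> = A * X * A * Y"
      using transpose_mult[OF A X] X3 assoc_mult_mat[OF AX A Y] by simp
    finally show ?thesis using X1 by simp
  qed
  have XA_YA: "X * A = Y * A"
  proof -
    have At_YA: "transpose_mat A = (Y * A) * transpose_mat A"
      using arg_cong[OF Y1, of transpose_mat] assoc_mult_mat[OF A Y A] transpose_mult[OF A YA] Y4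
      by simp
    have "X * A = transpose_mat A * transpose_mat X"
      using transpose_mult[OF X A] X4 by simp
    also have "\<dots> = (Y * A) * (transpose_mat A * transpose_mat X)"
      by (subst At_YA) (rule assoc_mult_mat[OF YA At Xt])
    also have "\<dots> = Y * (A * X * A)"
      using transpose_mult[OF X A] X4 assoc_mult_mat[OF Y A XA] assoc_mult_mat[OF A X A] by simp
    finally show ?thesis using X1 by simp
  qed
  have "X = X * (A * X)" using X2 assoc_mult_mat[OF X A X] by simp
  also have "\<dots> = (X * A) * Y" using AX_AY assoc_mult_mat[OF X A Y] by simp
  also have "\<dots> = Y" using XA_YA Y2 by simp
  finally show ?thesis .
qed

lemma pinv_eqI:
  assumes A: "A \<in> carrier_mat m n" and X: "X \<in> carrier_mat n m"
    and "A * X * A = A" "X * A * X = X"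
    and "transpose_mat (A * X) = A * X" "transpose_mat (X * A) = X * A"
  shows "pinv A = X"
  unfolding pinv_def
proof (rule the_equality)
  show "X \<in> carrier_mat (dim_col A) (dim_row A) \<and> A * X * A = A \<and> X * A * X = X \<and>
      transpose_mat (A * X) = A * X \<and> transpose_mat (X * A) = X * A"
    using assms by auto
  fix Y assume "Y \<in> carrier_mat (dim_col A) (dim_row A) \<and> A * Y * A = A \<and> Y * A * Y = Y \<and>
      transpose_mat (A * Y) = A * Y \<and> transpose_mat (Y * A) = Y * A"
  then have Y: "Y \<in> carrier_mat n m" and "A * Y * A = A" "Y * A * Y = Y"
    "transpose_mat (A * Y) = A * Y" "transpose_mat (Y * A) = Y * A"
    using A by auto
  then show "Y = X"
    using moore_penrose_unique[OF A Y X] assms(3-6) by blast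
qed

section \<open>Half-vectorisation and the duplication matrix\<close>

abbreviation vech_dim :: "nat \<Rightarrow> nat" where
  "vech_dim d \<equiv> d * (d + 1) div 2"

lemma sum_lessThan_square_mod_div:
  "(\<Sum>k<d * d. H (k mod d) (k div d)) = (\<Sum>a<d. \<Sum>b<d. H a (b :: nat))"
proof -
  have "(\<Sum>k<d * d. H (k mod d) (k div d)) = (\<Sum>b<d. \<Sum>a<d. H a b)"
    by (simp add: sum_mult_product)
  also have "\<dots> = (\<Sum>a<d. \<Sum>b<d. H a b)"
    by (rule sum.swap)
  finally show ?thesis .
qed

lemma set_vech_pairs: "set (vech_pairs d) = {(i, j). j \<le> i \<and> i < d}"
  by (auto simp: vech_pairs_def image_iff intro!: bexI)

lemma distinct_vech_pairs: "distinct (vech_pairs d)"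
  unfolding vech_pairs_def
proof (rule distinct_concat)
  show "distinct (map (\<lambda>j. map (\<lambda>i. (i, j)) [j..<d]) [0..<d])"
  proof (subst distinct_map, intro conjI inj_onI)
    fix x y assume "x \<in> set [0..<d]" and eq: "map (\<lambda>i. (i, x)) [x..<d] = map (\<lambda>i. (i, y)) [y..<d]"
    then have "(x, x) \<in> set (map (\<lambda>i. (i, y)) [y..<d])"
      by (metis atLeastLessThan_iff eq imageI le_refl set_map set_upt)
    then show "x = y" by auto
  qed simp
qed (auto simp: distinct_map inj_on_def)

lemma length_vech_pairs: "length (vech_pairs d) = vech_dim d"
proof -
  have "length (vech_pairs d) = (\<Sum>j<d. d - j)"
    by (simp add: vech_pairs_def length_concat o_def sum_set_upt_conv_sum_list_nat[symmetric]
        lessThan_atLeast0)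
  also have "\<dots> = (\<Sum>j<d. Suc j)"
    using sum.nat_diff_reindex[of Suc d] by (simp add: Suc_diff_Suc)
  also have "2 * \<dots> = d * (d + 1)"
    by (induction d) (simp_all add: algebra_simps)
  finally show ?thesis by simp
qed

lemma vech_dim_le: "vech_dim d \<le> d * d"
proof -
  have "d * (d + 1) \<le> d * (2 * d)" by (cases d) auto
  then have "vech_dim d \<le> d * (2 * d) div 2" by (rule div_le_mono)
  then show ?thesis by simp
qed

lemma vech_dim_pos: "0 < d \<Longrightarrow> 0 < vech_dim d"
  by (cases d) auto

lemma vech_pairs_bij: "bij_betw ((!) (vech_pairs d)) {..<vech_dim d} (set (vech_pairs d))"
  by (rule bij_betw_nth) (auto simp: distinct_vech_pairs length_vech_pairs)

lemma vech_pairs_nth_lower: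
  assumes "p < vech_dim d" and "vech_pairs d ! p = (i, j)"
  shows "j \<le> i" and "i < d"
  using nth_mem[of p "vech_pairs d"] assms by (auto simp: length_vech_pairs set_vech_pairs)

lemma vech_pairs_nth_eq_iff:
  "p < vech_dim d \<Longrightarrow> q < vech_dim d \<Longrightarrow> vech_pairs d ! p = vech_pairs d ! q \<longleftrightarrow> p = q"
  using distinct_vech_pairs[of d] by (simp add: nth_eq_iff_index_eq length_vech_pairs)

lemma vech_pairs_nth_0: "0 < d \<Longrightarrow> vech_pairs d ! 0 = (0, 0)"
  by (simp add: vech_pairs_def upt_conv_Cons)

definition sort_pair :: "nat \<Rightarrow> nat \<Rightarrow> nat \<times> nat" where
  "sort_pair a b = (max a b, min a b)"

lemma sort_pair_commute: "sort_pair a b = sort_pair b a"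
  by (auto simp: sort_pair_def)

lemma sort_pair_in_vech_pairs: "a < d \<Longrightarrow> b < d \<Longrightarrow> sort_pair a b \<in> set (vech_pairs d)"
  by (auto simp: sort_pair_def set_vech_pairs)

lemma sum_vech_pairs_delta:
  assumes "a < d" "b < d"
  shows "(\<Sum>p<vech_dim d. if sort_pair a b = vech_pairs d ! p then F (vech_pairs d ! p) else 0) = F (sort_pair a b)"
proof -
  have "(\<Sum>p<vech_dim d. if sort_pair a b = vech_pairs d ! p then F (vech_pairs d ! p) else 0)
      = (\<Sum>x\<in>set (vech_pairs d). if sort_pair a b = x then F x else 0)"
    by (rule sum.reindex_bij_betw[OF vech_pairs_bij])
  also have "\<dots> = F (sort_pair a b)"
    using sort_pair_in_vech_pairs[OF assms] by (simp add: sum.delta')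
  finally show ?thesis .
qed

lemma sum_sort_pair_eq:
  assumes "j \<le> i" "i < d"
  shows "(\<Sum>a<d. \<Sum>b<d. if sort_pair a b = (i, j) then G a b else 0) =
    (if i = j then G i i else G i j + G j i)"
proof -
  have row: "(\<Sum>b<d. if sort_pair a b = (i, j) then G a b else 0) =
     (if a = i then G i j else 0) + (if a = j \<and> i \<noteq> j then G j i else 0)" for a
  proof -
    have "(\<Sum>b<d. if sort_pair a b = (i, j) then G a b else 0) =
      (\<Sum>b<d. (if b = j then (if a = i then G a b else 0) else 0) +
               (if b = i then (if a = j \<and> i \<noteq> j then G a b else 0) else 0))"
      using assms by (intro sum.cong) (auto simp: sort_pair_def max_def min_def)
    also have "\<dots> = (if a = i then G i j else 0) + (if a = j \<and> i \<noteq> j then G j i else 0)"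
      using assms by (simp add: sum.distrib sum.delta)
    finally show ?thesis .
  qed
  show ?thesis
    using assms by (simp add: row sum.distrib sum.delta)
qed

definition duplication_mat :: "nat \<Rightarrow> real mat" where
  "duplication_mat d = mat (d * d) (vech_dim d)
     (\<lambda>(k, p). if sort_pair (k mod d) (k div d) = vech_pairs d ! p then 1 else 0)"

lemma duplication_mat_carrier: "duplication_mat d \<in> carrier_mat (d * d) (vech_dim d)"
  by (simp add: duplication_mat_def)

lemma index_mod_div_less:
  assumes "k < d * (d :: nat)"
  shows "k mod d < d" and "k div d < d"
proof -
  have "0 < d" using assms by (cases d) auto
  then show "k mod d < d" by simp
  show "k div d < d" using assms by (simp add: less_mult_imp_div_less)
qed

lemma duplication_mat_vech:
  assumes A: "A \<in> carrier_mat d d" and sym: "transpose_mat A = A"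
  shows "vec_mat A = duplication_mat d *\<^sub>v vech_mat A"
proof (rule eq_vecI)
  show "dim_vec (vec_mat A) = dim_vec (duplication_mat d *\<^sub>v vech_mat A)"
    using A by (simp add: vec_mat_def duplication_mat_def)
  fix k assume "k < dim_vec (duplication_mat d *\<^sub>v vech_mat A)"
  then have k: "k < d * d" by (simp add: duplication_mat_def)
  note km = index_mod_div_less[OF k]
  have vech: "vech_mat A \<in> carrier_vec (vech_dim d)"
    using A by (simp add: vech_mat_def length_vech_pairs)
  have "(duplication_mat d *\<^sub>v vech_mat A) $ k =
      (\<Sum>p<vech_dim d. duplication_mat d $$ (k, p) * vech_mat A $ p)"
    by (rule index_mult_mat_vec_sum[OF duplication_mat_carrier vech k])
  also have "\<dots> =
      (\<Sum>p<vech_dim d. if sort_pair (k mod d) (k div d) = vech_pairs d ! p then A $$ (vech_pairs d ! p) else 0)"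
    using A k by (intro sum.cong) (simp_all add: vech_mat_def length_vech_pairs duplication_mat_def)
  also have "\<dots> = A $$ sort_pair (k mod d) (k div d)"
    using km by (rule sum_vech_pairs_delta)
  also have "\<dots> = A $$ (k mod d, k div d)"
    using km A arg_cong[OF sym, of "\<lambda>B. B $$ (k mod d, k div d)"]
    by (auto simp: sort_pair_def max_def min_def)
  finally have "(duplication_mat d *\<^sub>v vech_mat A) $ k = A $$ (k mod d, k div d)" .
  moreover have "vec_mat A $ k = A $$ (k mod d, k div d)"
    using A k by (simp add: vec_mat_def)
  ultimately show "vec_mat A $ k = (duplication_mat d *\<^sub>v vech_mat A) $ k"
    by linarith
qed

text \<open>Column \<open>p\<close> is recovered from the symmetric 0-1 matrix whose half-vectorisation is the \<open>p\<close>-th unit vector.\<close>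
lemma duplication_mat_unique:
  assumes D: "D \<in> carrier_mat (d * d) (vech_dim d)"
    and vech: "\<forall>A \<in> carrier_mat d d. transpose_mat A = A \<longrightarrow> vec_mat A = D *\<^sub>v vech_mat A"
  shows "D = duplication_mat d"
proof (rule eq_matI)
  fix k p assume "k < dim_row (duplication_mat d)" "p < dim_col (duplication_mat d)"
  then have k: "k < d * d" and p: "p < vech_dim d" by (auto simp: duplication_mat_def)
  define A where "A = mat d d (\<lambda>(a, b). if sort_pair a b = vech_pairs d ! p then 1 else (0 :: real))"
  have A: "A \<in> carrier_mat d d" "transpose_mat A = A"
    by (auto simp: A_def sort_pair_commute)
  have "vech_mat A = unit_vec (vech_dim d) p"
  proof (rule eq_vecI)
    fix q assume "q < dim_vec (unit_vec (vech_dim d) p)"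
    then have q: "q < vech_dim d" by simp
    obtain i j where ij: "vech_pairs d ! q = (i, j)" by fastforce
    note lower = vech_pairs_nth_lower[OF q ij]
    have sorted: "sort_pair i j = (i, j)" using lower by (simp add: sort_pair_def)
    have "(i, j) = vech_pairs d ! p \<longleftrightarrow> q = p"
      using vech_pairs_nth_eq_iff[OF q p] ij by simp
    then show "vech_mat A $ q = unit_vec (vech_dim d) p $ q"
      using q p lower ij sorted by (simp add: vech_mat_def A_def length_vech_pairs unit_vec_def)
  qed (simp add: vech_mat_def A_def length_vech_pairs)
  then have "vec_mat A = D *\<^sub>v unit_vec (vech_dim d) p"
    using vech A by auto
  then have "D $$ (k, p) = vec_mat A $ k"
    using D k p by (simp add: scalar_prod_right_unit)
  also have "\<dots> = duplication_mat d $$ (k, p)"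
    using k p index_mod_div_less[OF k] by (simp add: vec_mat_def A_def duplication_mat_def)
  finally show "D $$ (k, p) = duplication_mat d $$ (k, p)" .
qed (use D in \<open>auto simp: duplication_mat_def\<close>)

lemma dup_mat_eq: "dup_mat d = duplication_mat d"
  unfolding dup_mat_def
proof (rule the_equality)
  show "duplication_mat d \<in> carrier_mat (d * d) (vech_dim d) \<and>
      (\<forall>A \<in> carrier_mat d d. transpose_mat A = A \<longrightarrow> vec_mat A = duplication_mat d *\<^sub>v vech_mat A)"
    using duplication_mat_carrier duplication_mat_vech by blast
qed (simp add: duplication_mat_unique)

definition vech_weight :: "nat \<Rightarrow> nat \<Rightarrow> real" where
  "vech_weight d p = (if fst (vech_pairs d ! p) = snd (vech_pairs d ! p) then 1 else 2)"

lemma vech_weight_pos: "0 < vech_weight d p"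
  by (simp add: vech_weight_def)

lemma duplication_mat_gram:
  assumes p: "p < vech_dim d" and q: "q < vech_dim d"
  shows "(\<Sum>k<d * d. duplication_mat d $$ (k, p) * duplication_mat d $$ (k, q)) =
    (if p = q then vech_weight d p else 0)"
proof -
  obtain i j where ij: "vech_pairs d ! p = (i, j)" by fastforce
  note lower = vech_pairs_nth_lower[OF p ij]
  define c :: real where "c = (if (i, j) = vech_pairs d ! q then 1 else 0)"
  have "(\<Sum>k<d * d. duplication_mat d $$ (k, p) * duplication_mat d $$ (k, q)) =
      (\<Sum>k<d * d. (\<lambda>a b. if sort_pair a b = (i, j) then c else 0) (k mod d) (k div d))"
    using p q ij by (intro sum.cong) (auto simp: duplication_mat_def c_def)
  also have "\<dots> = (\<Sum>a<d. \<Sum>b<d. if sort_pair a b = (i, j) then c else 0)"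
    by (rule sum_lessThan_square_mod_div)
  also have "\<dots> = (if i = j then c else c + c)"
    by (rule sum_sort_pair_eq[OF lower])
  also have "\<dots> = (if p = q then vech_weight d p else 0)"
  proof -
    have "c = (if p = q then 1 else 0)"
      using vech_pairs_nth_eq_iff[OF p q] ij by (simp add: c_def)
    moreover have "vech_weight d p = (if i = j then 1 else 2)"
      using ij by (simp add: vech_weight_def)
    ultimately show ?thesis by auto
  qed
  finally show ?thesis .
qed

definition duplication_pinv :: "nat \<Rightarrow> real mat" where
  "duplication_pinv d = mat (vech_dim d) (d * d) (\<lambda>(p, k). duplication_mat d $$ (k, p) / vech_weight d p)"

lemma duplication_pinv_carrier: "duplication_pinv d \<in> carrier_mat (vech_dim d) (d * d)"
  by (simp add: duplication_pinv_def)

lemma index_duplication_pinv: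
  "p < vech_dim d \<Longrightarrow> k < d * d \<Longrightarrow> duplication_pinv d $$ (p, k) = duplication_mat d $$ (k, p) / vech_weight d p"
  by (simp add: duplication_pinv_def)

lemma duplication_pinv_mult_duplication: "duplication_pinv d * duplication_mat d = 1\<^sub>m (vech_dim d)"
proof (rule eq_matI)
  fix p q assume "p < dim_row (1\<^sub>m (vech_dim d))" "q < dim_col (1\<^sub>m (vech_dim d))"
  then have p: "p < vech_dim d" and q: "q < vech_dim d" by auto
  have "(duplication_pinv d * duplication_mat d) $$ (p, q) =
      (\<Sum>k<d * d. duplication_pinv d $$ (p, k) * duplication_mat d $$ (k, q))"
    by (rule index_mult_mat_sum[OF duplication_pinv_carrier duplication_mat_carrier p q])
  also have "\<dots> = (\<Sum>k<d * d. duplication_mat d $$ (k, p) * duplication_mat d $$ (k, q)) / vech_weight d p"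
    unfolding sum_divide_distrib by (intro sum.cong refl) (simp add: index_duplication_pinv[OF p])
  finally show "(duplication_pinv d * duplication_mat d) $$ (p, q) = 1\<^sub>m (vech_dim d) $$ (p, q)"
    using duplication_mat_gram[OF p q] vech_weight_pos[of d p] vech_weight_pos[of d q] p q by simp
qed (auto simp: duplication_pinv_def duplication_mat_def)

lemma duplication_mult_pinv_symmetric:
  "transpose_mat (duplication_mat d * duplication_pinv d) = duplication_mat d * duplication_pinv d"
proof -
  have entry: "(duplication_mat d * duplication_pinv d) $$ (k, l) =
      (\<Sum>p<vech_dim d. duplication_mat d $$ (k, p) * duplication_mat d $$ (l, p) / vech_weight d p)"
    if "k < d * d" "l < d * d" for k l
    unfolding index_mult_mat_sum[OF duplication_mat_carrier duplication_pinv_carrier that]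
    by (intro sum.cong refl) (simp add: index_duplication_pinv that)
  have dims: "dim_row (duplication_mat d * duplication_pinv d) = d * d"
    "dim_col (duplication_mat d * duplication_pinv d) = d * d"
    using duplication_mat_carrier duplication_pinv_carrier by auto
  show ?thesis
  proof (rule eq_matI)
    fix k l assume "k < dim_row (duplication_mat d * duplication_pinv d)"
      "l < dim_col (duplication_mat d * duplication_pinv d)"
    then have k: "k < d * d" and l: "l < d * d" by (simp_all only: dims)
    have "transpose_mat (duplication_mat d * duplication_pinv d) $$ (k, l) =
        (duplication_mat d * duplication_pinv d) $$ (l, k)"
      by (rule index_transpose_mat) (simp_all only: dims k l)
    also have "\<dots> = (duplication_mat d * duplication_pinv d) $$ (k, l)"
      unfolding entry[OF l k] entry[OF k l] by (simp add: mult.commute)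
    finally show "transpose_mat (duplication_mat d * duplication_pinv d) $$ (k, l) =
        (duplication_mat d * duplication_pinv d) $$ (k, l)" .
  qed (use duplication_mat_carrier[of d] duplication_pinv_carrier[of d] in auto)
qed

lemma pinv_dup_mat: "pinv (dup_mat d) = duplication_pinv d"
  unfolding dup_mat_eq
proof (rule pinv_eqI[OF duplication_mat_carrier duplication_pinv_carrier])
  have "duplication_mat d * duplication_pinv d * duplication_mat d =
      duplication_mat d * (duplication_pinv d * duplication_mat d)"
    by (rule assoc_mult_mat[OF duplication_mat_carrier duplication_pinv_carrier duplication_mat_carrier])
  then show "duplication_mat d * duplication_pinv d * duplication_mat d = duplication_mat d"
    by (simp only: duplication_pinv_mult_duplication right_mult_one_mat[OF duplication_mat_carrier])
  show "duplication_pinv d * duplication_mat d * duplication_pinv d = duplication_pinv d"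
    by (simp only: duplication_pinv_mult_duplication left_mult_one_mat[OF duplication_pinv_carrier])
qed (simp_all only: duplication_mult_pinv_symmetric duplication_pinv_mult_duplication transpose_one)

lemma index_duplication_pinv_gram:
  assumes p: "p < vech_dim d" and q: "q < vech_dim d"
  shows "(duplication_pinv d * transpose_mat (duplication_pinv d)) $$ (p, q) =
    (if p = q then 1 / vech_weight d p else 0)"
proof -
  have Xt: "transpose_mat (duplication_pinv d) \<in> carrier_mat (d * d) (vech_dim d)"
    using duplication_pinv_carrier by simp
  have "(duplication_pinv d * transpose_mat (duplication_pinv d)) $$ (p, q) =
      (\<Sum>k<d * d. duplication_mat d $$ (k, p) * duplication_mat d $$ (k, q)) / (vech_weight d p * vech_weight d q)"
    unfolding index_mult_mat_sum[OF duplication_pinv_carrier Xt p q] sum_divide_distrib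
    using duplication_pinv_carrier[of d] q
    by (intro sum.cong refl) (simp add: index_duplication_pinv[OF p] index_duplication_pinv[OF q])
  then show ?thesis
    using duplication_mat_gram[OF p q] vech_weight_pos[of d p] by simp
qed

lemma lam_max_pinv_dup_gram_ge_1:
  assumes "0 < d"
  shows "1 \<le> lam_max (pinv (dup_mat d) * transpose_mat (pinv (dup_mat d)))"
proof -
  let ?P = "duplication_pinv d * transpose_mat (duplication_pinv d)"
  have P: "?P \<in> carrier_mat (vech_dim d) (vech_dim d)"
    using duplication_pinv_carrier[of d] by (metis mult_carrier_mat transpose_carrier_mat)
  have N: "0 < vech_dim d" using assms by (rule vech_dim_pos)
  have w0: "vech_weight d 0 = 1"
    using vech_pairs_nth_0[OF assms] by (simp add: vech_weight_def)
  have "?P *\<^sub>v unit_vec (vech_dim d) 0 = 1 \<cdot>\<^sub>v unit_vec (vech_dim d) 0"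
  proof (rule eq_vecI)
    fix p assume "p < dim_vec (1 \<cdot>\<^sub>v unit_vec (vech_dim d) 0)"
    then have p: "p < vech_dim d" by simp
    have "(?P *\<^sub>v unit_vec (vech_dim d) 0) $ p = (\<Sum>k<vech_dim d. if k = 0 then ?P $$ (p, k) else 0)"
      unfolding index_mult_mat_vec_sum[OF P unit_vec_carrier p] by (intro sum.cong refl) simp
    also have "\<dots> = ?P $$ (p, 0)"
      using N by (simp only: sum.delta finite_lessThan lessThan_iff if_True)
    also have "\<dots> = (1 \<cdot>\<^sub>v unit_vec (vech_dim d) 0) $ p"
      using p N w0 by (subst index_duplication_pinv_gram[OF p N]) simp
    finally show "(?P *\<^sub>v unit_vec (vech_dim d) 0) $ p = (1 \<cdot>\<^sub>v unit_vec (vech_dim d) 0) $ p" .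
  qed (use duplication_pinv_carrier[of d] in simp)
  then have "eigenvector ?P (unit_vec (vech_dim d) 0) 1"
    unfolding eigenvector_def using N duplication_pinv_carrier[of d] by simp
  then have "eigenvalue ?P 1"
    unfolding eigenvalue_def by blast
  then have "1 \<le> lam_max ?P"
    unfolding lam_max_def using finite_eigenvalues[OF P] by (simp add: Max_ge)
  then show ?thesis by (simp add: pinv_dup_mat)
qed

section \<open>Smallest eigenvalue of a symmetric matrix\<close>

lemma nonneg_quadratic_imp_linear_coeff_zero:
  fixes a b :: real
  assumes nonneg: "\<And>t. 0 \<le> a * t + b * t\<^sup>2"
  shows "a = 0"
proof (rule ccontr)
  assume "a \<noteq> 0"
  then have a2: "0 < a\<^sup>2" by simp
  define c where "c = \<bar>b\<bar> + 1"
  have c: "0 < c" by (simp add: c_def)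
  have "b * (a / c)\<^sup>2 \<le> \<bar>b\<bar> * a\<^sup>2 / c\<^sup>2"
    by (simp add: power_divide) (metis abs_ge_self divide_right_mono mult_right_mono zero_le_power2)
  also have "\<dots> < c * a\<^sup>2 / c\<^sup>2"
    using a2 c by (intro divide_strict_right_mono) (auto simp: c_def)
  also have "\<dots> = a\<^sup>2 / c"
    using c by (simp add: power2_eq_square)
  finally have "a * (- a / c) + b * (- a / c)\<^sup>2 < 0"
    by (simp add: power2_eq_square)
  with nonneg show False by (meson not_less)
qed

lemma sum_squares_eq_0_imp_eq_0:
  fixes w :: "nat \<Rightarrow> real"
  assumes "(\<Sum>i<m. (w i)\<^sup>2) = 0" "i < m"
  shows "w i = 0"
  using assms sum_nonneg_eq_0_iff[of "{..<m}" "\<lambda>i. (w i)\<^sup>2"] by simp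

lemma quadratic_form_ge_of_unit_ge:
  fixes A :: "real mat"
  assumes unit: "\<And>w. (\<Sum>i<m. (w i)\<^sup>2) = 1 \<Longrightarrow> \<mu> \<le> (\<Sum>i<m. \<Sum>j<m. w i * A $$ (i, j) * w j)"
  shows "\<mu> * (\<Sum>i<m. (w i)\<^sup>2) \<le> (\<Sum>i<m. \<Sum>j<m. w i * A $$ (i, j) * w j)"
proof (cases "(\<Sum>i<m. (w i)\<^sup>2) = 0")
  case True
  then show ?thesis
    using sum_squares_eq_0_imp_eq_0[OF True] by simp
next
  case False
  define s where "s = sqrt (\<Sum>i<m. (w i)\<^sup>2)"
  have s: "0 < s" using False by (simp add: s_def sum_nonneg order.not_eq_order_implies_strict)
  have "(\<Sum>i<m. (w i / s)\<^sup>2) = 1"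
    using s by (simp add: power_divide sum_divide_distrib[symmetric] s_def)
  then have "\<mu> \<le> (\<Sum>i<m. \<Sum>j<m. w i / s * A $$ (i, j) * (w j / s))"
    by (rule unit)
  also have "\<dots> = (\<Sum>i<m. \<Sum>j<m. w i * A $$ (i, j) * w j) / s\<^sup>2"
    unfolding sum_divide_distrib by (intro sum.cong refl) (simp add: power2_eq_square)
  finally show ?thesis
    using s by (simp add: s_def pos_le_divide_eq mult.commute)
qed

text \<open>The type \<open>'a\<close> serves only as a Euclidean space of dimension at least \<open>m\<close> whose unit sphere is compact.\<close>
lemma quadratic_form_attains_min_on_sphere:
  fixes A :: "real mat"
  assumes m: "0 < m" and mT: "m \<le> CARD('a::finite)"
  shows "\<exists>u. (\<Sum>i<m. (u i)\<^sup>2) = 1 \<and> (\<forall>w. (\<Sum>i<m. (w i)\<^sup>2) = 1 \<longrightarrow>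
    (\<Sum>i<m. \<Sum>j<m. u i * A $$ (i, j) * u j) \<le> (\<Sum>i<m. \<Sum>j<m. w i * A $$ (i, j) * w j))"
proof -
  obtain h :: "nat \<Rightarrow> 'a" where h: "bij_betw h {0..<CARD('a)} UNIV"
    using ex_bij_betw_nat_finite[of "UNIV :: 'a set"] by auto
  have inj: "inj_on h {..<m}"
    by (rule inj_on_subset[OF bij_betw_imp_inj_on[OF h]]) (use mT in auto)
  define E where "E = h ` {..<m}"
  define Q where "Q = (\<lambda>w. \<Sum>i<m. \<Sum>j<m. w i * A $$ (i, j) * w j)"
  define S where "S = {y :: real^'a. norm y = 1 \<and> (\<forall>a. a \<notin> E \<longrightarrow> vec_nth y a = 0)}"
  have norm_S: "norm y = 1 \<longleftrightarrow> (\<Sum>i<m. (vec_nth y (h i))\<^sup>2) = 1"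
    if "\<forall>a. a \<notin> E \<longrightarrow> vec_nth y a = 0" for y :: "real^'a"
  proof -
    have "(\<Sum>a\<in>UNIV. (vec_nth y a)\<^sup>2) = (\<Sum>a\<in>E. (vec_nth y a)\<^sup>2)"
      using that by (intro sum.mono_neutral_right) auto
    also have "\<dots> = (\<Sum>i<m. (vec_nth y (h i))\<^sup>2)"
      unfolding E_def by (rule sum.reindex[OF inj, unfolded comp_def])
    finally show ?thesis
      by (simp add: norm_eq_1 inner_vec_def power2_eq_square)
  qed
  have S_eq: "S = sphere 0 1 \<inter> (\<Inter>a\<in>-E. {y. vec_nth y a = 0})"
    by (auto simp: S_def)
  have "closed S" unfolding S_eq
    by (intro closed_Int closed_sphere closed_INT ballI closed_Collect_eq continuous_intros)
  moreover have "bounded S" unfolding S_eq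
    by (rule bounded_Int) auto
  ultimately have "compact S"
    by (simp add: compact_eq_bounded_closed)
  moreover have "axis (h 0) 1 \<in> S"
  proof -
    have "\<forall>a. a \<notin> E \<longrightarrow> vec_nth (axis (h 0) (1 :: real)) a = 0"
      using m by (auto simp: E_def axis_def)
    then show ?thesis
      using norm_axis_1[of "h 0"] by (simp add: S_def)
  qed
  moreover have "continuous_on S (\<lambda>y. Q (\<lambda>i. vec_nth y (h i)))"
    unfolding Q_def by (intro continuous_intros)
  ultimately obtain y0 where y0: "y0 \<in> S" and min: "\<And>y. y \<in> S \<Longrightarrow> Q (\<lambda>i. vec_nth y0 (h i)) \<le> Q (\<lambda>i. vec_nth y (h i))"
    using continuous_attains_inf[of S] by blast
  have "Q (\<lambda>i. vec_nth y0 (h i)) \<le> Q w" if w: "(\<Sum>i<m. (w i)\<^sup>2) = 1" for w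
  proof -
    define y where "y = vec_lambda (\<lambda>a. if a \<in> E then w (inv_into {..<m} h a) else 0 :: real)"
    have yh: "vec_nth y (h i) = w i" if "i < m" for i
      using that inj by (simp add: y_def E_def inv_into_f_f)
    have "y \<in> S"
      using norm_S[of y] yh w by (simp add: S_def y_def)
    moreover have "Q (\<lambda>i. vec_nth y (h i)) = Q w"
      unfolding Q_def by (intro sum.cong refl) (simp add: yh)
    ultimately show ?thesis
      using min by fastforce
  qed
  moreover have "(\<Sum>i<m. (vec_nth y0 (h i))\<^sup>2) = 1"
    using y0 norm_S unfolding S_def by auto
  ultimately have "(\<Sum>i<m. (vec_nth y0 (h i))\<^sup>2) = 1 \<and>
      (\<forall>w. (\<Sum>i<m. (w i)\<^sup>2) = 1 \<longrightarrow> Q (\<lambda>i. vec_nth y0 (h i)) \<le> Q w)"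
    by blast
  then show ?thesis
    unfolding Q_def by (rule exI[of _ "\<lambda>i. vec_nth y0 (h i)"])
qed

lemma quadratic_form_minimizer_eigen:
  fixes A :: "real mat"
  assumes sym: "\<And>i j. i < m \<Longrightarrow> j < m \<Longrightarrow> A $$ (i, j) = A $$ (j, i)"
    and min: "\<And>w. \<mu> * (\<Sum>i<m. (w i)\<^sup>2) \<le> (\<Sum>i<m. \<Sum>j<m. w i * A $$ (i, j) * w j)"
    and u_norm: "(\<Sum>i<m. (u i)\<^sup>2) = 1"
    and u_min: "(\<Sum>i<m. \<Sum>j<m. u i * A $$ (i, j) * u j) = \<mu>"
    and i: "i < m"
  shows "(\<Sum>j<m. A $$ (i, j) * u j) = \<mu> * u i"
proof -
  define Q where "Q = (\<lambda>w. \<Sum>i<m. \<Sum>j<m. w i * A $$ (i, j) * w j)"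
  define g where "g = (\<lambda>i. (\<Sum>j<m. A $$ (i, j) * u j) - \<mu> * u i)"
  have expand: "Q (\<lambda>i. u i + t * z i) - \<mu> * (\<Sum>i<m. (u i + t * z i)\<^sup>2) =
      2 * t * (\<Sum>i<m. z i * g i) + t\<^sup>2 * (Q z - \<mu> * (\<Sum>i<m. (z i)\<^sup>2))" for t z
  proof -
    have cross: "(\<Sum>i<m. \<Sum>j<m. u i * A $$ (i, j) * z j) = (\<Sum>i<m. \<Sum>j<m. z i * A $$ (i, j) * u j)"
      by (subst sum.swap) (simp add: sym mult.commute mult.left_commute)
    have "Q (\<lambda>i. u i + t * z i) = Q u + t * (\<Sum>i<m. \<Sum>j<m. u i * A $$ (i, j) * z j)
        + t * (\<Sum>i<m. \<Sum>j<m. z i * A $$ (i, j) * u j) + t\<^sup>2 * Q z"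
      by (simp add: Q_def power2_eq_square algebra_simps sum.distrib sum_distrib_left)
    moreover have "(\<Sum>i<m. (u i + t * z i)\<^sup>2) =
        1 + 2 * t * (\<Sum>i<m. u i * z i) + t\<^sup>2 * (\<Sum>i<m. (z i)\<^sup>2)"
      using u_norm by (simp add: power2_eq_square algebra_simps sum.distrib sum_distrib_left)
    moreover have "(\<Sum>i<m. \<Sum>j<m. z i * A $$ (i, j) * u j) = (\<Sum>i<m. z i * g i) + \<mu> * (\<Sum>i<m. u i * z i)"
      by (simp add: g_def algebra_simps sum.distrib sum_distrib_left sum_subtractf)
    ultimately show ?thesis
      using cross u_min by (simp add: Q_def algebra_simps power2_eq_square)
  qed
  have orth: "(\<Sum>i<m. z i * g i) = 0" for z
  proof -
    have "0 \<le> (2 * (\<Sum>i<m. z i * g i)) * t + (Q z - \<mu> * (\<Sum>i<m. (z i)\<^sup>2)) * t\<^sup>2" for t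
      using min[of "\<lambda>i. u i + t * z i"] expand[of t z] by (simp add: Q_def algebra_simps)
    then show ?thesis
      using nonneg_quadratic_imp_linear_coeff_zero by fastforce
  qed
  have "(\<Sum>i<m. (g i)\<^sup>2) = 0"
    using orth[of g] by (simp add: power2_eq_square)
  then have "g i = 0"
    by (rule sum_squares_eq_0_imp_eq_0[OF _ i])
  then show ?thesis
    by (simp add: g_def)
qed

lemma lam_min_symmetric:
  fixes A :: "real mat"
  assumes A: "A \<in> carrier_mat m m" and sym: "transpose_mat A = A"
    and m: "0 < m" and mT: "m \<le> CARD('a::finite)"
  shows "eigenvalue A (lam_min A)"
    and "\<And>x. x \<in> carrier_vec m \<Longrightarrow> lam_min A * (x \<bullet> x) \<le> x \<bullet> (A *\<^sub>v x)"
proof -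
  obtain u where u_norm: "(\<Sum>i<m. (u i)\<^sup>2) = 1"
    and u_min: "\<And>w. (\<Sum>i<m. (w i)\<^sup>2) = 1 \<Longrightarrow>
      (\<Sum>i<m. \<Sum>j<m. u i * A $$ (i, j) * u j) \<le> (\<Sum>i<m. \<Sum>j<m. w i * A $$ (i, j) * w j)"
    using quadratic_form_attains_min_on_sphere[OF m mT, of A] by blast
  define \<mu> where "\<mu> = (\<Sum>i<m. \<Sum>j<m. u i * A $$ (i, j) * u j)"
  have min: "\<mu> * (\<Sum>i<m. (w i)\<^sup>2) \<le> (\<Sum>i<m. \<Sum>j<m. w i * A $$ (i, j) * w j)" for w
    unfolding \<mu>_def by (rule quadratic_form_ge_of_unit_ge[OF u_min])
  have sym_entry: "A $$ (i, j) = A $$ (j, i)" if "i < m" "j < m" for i j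
    using arg_cong[OF sym, of "\<lambda>B. B $$ (i, j)"] that A by auto
  have rayleigh: "\<mu> * (x \<bullet> x) \<le> x \<bullet> (A *\<^sub>v x)" if x: "x \<in> carrier_vec m" for x
    using min[of "vec_index x"] by (simp add: quadratic_form_sum[OF A x] scalar_prod_self_sum[OF x])
  define x0 where "x0 = Matrix.vec m u"
  have x0: "x0 \<in> carrier_vec m" by (simp add: x0_def)
  have "x0 \<noteq> 0\<^sub>v m"
  proof
    assume "x0 = 0\<^sub>v m"
    then have "\<And>i. i < m \<Longrightarrow> u i = 0" by (metis index_vec index_zero_vec(1) x0_def)
    with u_norm show False by simp
  qed
  moreover have "A *\<^sub>v x0 = \<mu> \<cdot>\<^sub>v x0"
  proof (rule eq_vecI)
    fix i assume "i < dim_vec (\<mu> \<cdot>\<^sub>v x0)"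
    then have i: "i < m" by (simp add: x0_def)
    have "(A *\<^sub>v x0) $ i = (\<Sum>j<m. A $$ (i, j) * u j)"
      unfolding index_mult_mat_vec_sum[OF A x0 i] by (simp add: x0_def)
    also have "\<dots> = \<mu> * u i"
      by (rule quadratic_form_minimizer_eigen[OF sym_entry min u_norm \<mu>_def[symmetric] i])
    finally show "(A *\<^sub>v x0) $ i = (\<mu> \<cdot>\<^sub>v x0) $ i"
      using i by (simp add: x0_def)
  qed (use A in \<open>simp add: x0_def\<close>)
  ultimately have eigen: "eigenvalue A \<mu>"
    unfolding eigenvalue_def eigenvector_def using A x0 by auto
  have "\<mu> \<le> k" if ev: "eigenvalue A k" for k
  proof -
    obtain v where v: "v \<in> carrier_vec m" "v \<noteq> 0\<^sub>v m" "A *\<^sub>v v = k \<cdot>\<^sub>v v"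
      using A ev by (rule eigenvalueE)
    have "\<mu> * (v \<bullet> v) \<le> k * (v \<bullet> v)"
      using rayleigh[OF v(1)] v(1,3) by simp
    then show ?thesis
      using scalar_prod_self_pos[OF v(1,2)] by simp
  qed
  then have "lam_min A = \<mu>"
    unfolding lam_min_def using finite_eigenvalues[OF A] eigen by (intro Min_eqI) auto
  then show "eigenvalue A (lam_min A)" and "\<And>x. x \<in> carrier_vec m \<Longrightarrow> lam_min A * (x \<bullet> x) \<le> x \<bullet> (A *\<^sub>v x)"
    using eigen rayleigh by simp_all
qed

lemma lam_min_ge_of_quadratic_form_ge:
  fixes A :: "real mat"
  assumes A: "A \<in> carrier_mat m m" and eigen: "eigenvalue A (lam_min A)"
    and ge: "\<And>x. x \<in> carrier_vec m \<Longrightarrow> c * (x \<bullet> x) \<le> x \<bullet> (A *\<^sub>v x)"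
  shows "c \<le> lam_min A"
proof -
  obtain v where v: "v \<in> carrier_vec m" "v \<noteq> 0\<^sub>v m" "A *\<^sub>v v = lam_min A \<cdot>\<^sub>v v"
    using A eigen by (rule eigenvalueE)
  have "c * (v \<bullet> v) \<le> lam_min A * (v \<bullet> v)"
    using ge[OF v(1)] v(1,3) by simp
  then show ?thesis
    using scalar_prod_self_pos[OF v(1,2)] by simp
qed

section \<open>The kernel matrix \<open>R\<close>\<close>

lemma partial_deriv_eq_0_on_open:
  fixes g :: "real^'n::finite \<Rightarrow> real"
  assumes U: "open U" and zero: "\<And>y. y \<in> U \<Longrightarrow> g y = 0" and y: "y \<in> U"
  shows "partial_deriv i g y = 0"
proof -
  obtain e where e: "0 < e" "ball y e \<subseteq> U" using U y by (meson openE)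
  have "\<forall>\<^sub>F t in nhds 0. t \<in> ball (0 :: real) e"
    using e(1) by (intro eventually_nhds_in_open) auto
  then have "\<forall>\<^sub>F t in nhds 0. g (y + t *\<^sub>R axis i 1) = 0"
    by eventually_elim (use e zero in \<open>auto simp: dist_norm subset_iff\<close>)
  then have "((\<lambda>t. g (y + t *\<^sub>R axis i 1)) has_field_derivative 0) (at 0)"
    by (subst DERIV_cong_ev[OF refl _ refl]) auto
  then show ?thesis
    unfolding partial_deriv_def by (rule DERIV_imp_deriv)
qed

lemma continuous_on_Ck: "Ck k g \<Longrightarrow> continuous_on UNIV g"
  by (cases k) simp_all

lemma Ck_partial_deriv: "Ck (Suc k) g \<Longrightarrow> Ck k (partial_deriv i g)"
  by simp

lemma continuous_on_second_partial:
  "Ck (Suc (Suc k)) g \<Longrightarrow> continuous_on UNIV (partial_deriv i (partial_deriv j g))"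
  by (intro continuous_on_Ck Ck_partial_deriv)

lemma index_d2K:
  fixes K :: "real^'n::finite \<Rightarrow> real"
  assumes k: "k < vech_dim CARD('n)"
  shows "d2K K u $ k = partial_deriv (coord (fst (vech_pairs CARD('n) ! k)))
    (partial_deriv (coord (snd (vech_pairs CARD('n) ! k))) K) u"
proof -
  obtain a b where ab: "vech_pairs CARD('n) ! k = (a, b)" by fastforce
  then have "a < CARD('n)" "b \<le> a"
    using vech_pairs_nth_lower[OF k ab] by simp_all
  then show ?thesis
    using k ab by (simp add: d2K_def vech_mat_def to_jmat_def length_vech_pairs hessK_def)
qed

lemma continuous_on_index_d2K:
  fixes K :: "real^'n::finite \<Rightarrow> real"
  assumes "Ck 4 K" and "k < vech_dim CARD('n)"
  shows "continuous_on UNIV (\<lambda>u. d2K K u $ k)"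
  using assms continuous_on_second_partial[of 2 K] by (simp add: index_d2K numeral_eq_Suc)

lemma index_d2K_eq_0_outside_ball:
  fixes K :: "real^'n::finite \<Rightarrow> real"
  assumes K: "\<forall>u. 1 < norm u \<longrightarrow> K u = 0" and k: "k < vech_dim CARD('n)" and u: "1 < norm u"
  shows "d2K K u $ k = 0"
proof -
  let ?U = "{u :: real^'n. 1 < norm u}"
  have U: "open ?U" by (intro open_Collect_less continuous_intros)
  have "partial_deriv j K y = 0" if "y \<in> ?U" for j y
    using partial_deriv_eq_0_on_open[OF U _ that] K by simp
  then show ?thesis
    using partial_deriv_eq_0_on_open[OF U _ ] u by (simp add: index_d2K[OF k])
qed

lemma integrable_continuous_vanishing_outside:
  fixes G :: "'a::euclidean_space \<Rightarrow> real"
  assumes "continuous_on UNIV G" and "compact S" and "\<And>u. u \<notin> S \<Longrightarrow> G u = 0"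
  shows "integrable lborel G"
proof -
  have "integrable lborel (\<lambda>u. indicator S u *\<^sub>R G u)"
    using assms by (intro borel_integrable_compact) (auto intro: continuous_on_subset)
  also have "(\<lambda>u. indicator S u *\<^sub>R G u) = G"
    using assms(3) by (auto simp: indicator_def fun_eq_iff)
  finally show ?thesis .
qed

lemma integral_square_pos:
  fixes G :: "'a::euclidean_space \<Rightarrow> real"
  assumes G: "continuous_on UNIV G" and int: "integrable lborel (\<lambda>u. (G u)\<^sup>2)" and u0: "G u0 \<noteq> 0"
  shows "0 < (\<integral>u. (G u)\<^sup>2 \<partial>lborel)"
proof -
  define c where "c = (G u0)\<^sup>2 / 2"
  have c: "0 < c" using u0 by (simp add: c_def)
  have "continuous (at u0) (\<lambda>u. (G u)\<^sup>2)"
    using G by (intro continuous_intros) (auto simp: continuous_on_eq_continuous_at)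
  then obtain r where r: "0 < r" and near: "\<And>u. dist u u0 < r \<Longrightarrow> dist ((G u)\<^sup>2) ((G u0)\<^sup>2) < c"
    using c unfolding continuous_at_eps_delta by blast
  have below: "c * indicator (ball u0 r) u \<le> (G u)\<^sup>2" for u
  proof (cases "u \<in> ball u0 r")
    case True
    then have "dist u u0 < r" by (simp add: dist_commute)
    then have "dist ((G u)\<^sup>2) ((G u0)\<^sup>2) < c" by (rule near)
    then have "(G u0)\<^sup>2 - c < (G u)\<^sup>2" by (simp add: dist_real_def abs_less_iff)
    then show ?thesis using True by (simp add: c_def)
  qed simp
  have "integrable lborel (\<lambda>u. c * indicator (ball u0 r) u)"
    using emeasure_lborel_ball_finite[of u0 r] by (intro integrable_mult_right integrable_real_indicator) auto
  then have "(\<integral>u. c * indicator (ball u0 r) u \<partial>lborel) \<le> (\<integral>u. (G u)\<^sup>2 \<partial>lborel)"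
    using int below by (rule integral_mono)
  moreover have "(\<integral>u. c * indicator (ball u0 r) u \<partial>lborel) = c * measure lborel (ball u0 r)"
    by simp
  moreover have "0 < measure lborel (ball u0 r)"
    using r content_ball_gt_0_iff by blast
  ultimately show ?thesis
    using c by (smt (verit) mult_pos_pos)
qed

lemma R_mat_carrier: "R_mat (K :: real^'n::finite \<Rightarrow> real) \<in> carrier_mat (vech_dim CARD('n)) (vech_dim CARD('n))"
  by (simp add: R_mat_def)

lemma R_mat_symmetric: "transpose_mat (R_mat (K :: real^'n::finite \<Rightarrow> real)) = R_mat K"
  by (rule eq_matI) (auto simp: R_mat_def mult.commute)

lemma R_mat_quadratic_form:
  fixes K :: "real^'n::finite \<Rightarrow> real"
  assumes C: "Ck 4 K" and supp: "\<forall>u. 1 < norm u \<longrightarrow> K u = 0"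
    and a: "a \<in> carrier_vec (vech_dim CARD('n))"
  shows "a \<bullet> (R_mat K *\<^sub>v a) = (\<integral>u. (\<Sum>k<vech_dim CARD('n). a $ k * d2K K u $ k)\<^sup>2 \<partial>lborel)"
proof -
  let ?N = "vech_dim CARD('n)"
  let ?\<phi> = "\<lambda>k u. d2K K u $ k"
  have int: "integrable lborel (\<lambda>u. a $ i * a $ j * (?\<phi> i u * ?\<phi> j u))" if "i < ?N" "j < ?N" for i j
  proof (intro integrable_mult_right integrable_continuous_vanishing_outside)
    show "continuous_on UNIV (\<lambda>u. ?\<phi> i u * ?\<phi> j u)"
      using continuous_on_index_d2K[OF C] that by (intro continuous_intros) auto
    show "?\<phi> i u * ?\<phi> j u = 0" if "u \<notin> cball 0 1" for u
      using index_d2K_eq_0_outside_ball[OF supp \<open>i < ?N\<close>] that by simp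
  qed simp
  have "a \<bullet> (R_mat K *\<^sub>v a) = (\<Sum>i<?N. \<Sum>j<?N. \<integral>u. a $ i * a $ j * (?\<phi> i u * ?\<phi> j u) \<partial>lborel)"
    unfolding quadratic_form_sum[OF R_mat_carrier a] by (intro sum.cong refl) (simp add: R_mat_def)
  also have "\<dots> = (\<Sum>i<?N. \<integral>u. (\<Sum>j<?N. a $ i * a $ j * (?\<phi> i u * ?\<phi> j u)) \<partial>lborel)"
    by (intro sum.cong refl Bochner_Integration.integral_sum[symmetric] int) auto
  also have "\<dots> = (\<integral>u. (\<Sum>i<?N. \<Sum>j<?N. a $ i * a $ j * (?\<phi> i u * ?\<phi> j u)) \<partial>lborel)"
    by (intro Bochner_Integration.integral_sum[symmetric] Bochner_Integration.integrable_sum int) auto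
  also have "\<dots> = (\<integral>u. (\<Sum>k<?N. a $ k * ?\<phi> k u)\<^sup>2 \<partial>lborel)"
    by (intro Bochner_Integration.integral_cong refl) (simp add: power2_eq_square sum_product algebra_simps)
  finally show ?thesis .
qed

lemma lam_min_R_mat_pos:
  fixes K :: "real^'n::finite \<Rightarrow> real"
  assumes C: "Ck 4 K" and supp: "\<forall>u. 1 < norm u \<longrightarrow> K u = 0"
    and indep: "\<forall>a :: nat \<Rightarrow> real.
      (\<forall>u. (\<Sum>k<vech_dim CARD('n). a k * (indicator (ball 0 1) u * d2K K u $ k)) = 0)
        \<longrightarrow> (\<forall>k<vech_dim CARD('n). a k = 0)"
  shows "0 < lam_min (R_mat K)"
proof -
  let ?N = "vech_dim CARD('n)"
  have N: "0 < ?N" by (rule vech_dim_pos) simp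
  have NT: "?N \<le> CARD('n \<times> 'n)" using vech_dim_le by simp
  obtain v where v: "v \<in> carrier_vec ?N" "v \<noteq> 0\<^sub>v ?N" "R_mat K *\<^sub>v v = lam_min (R_mat K) \<cdot>\<^sub>v v"
    using R_mat_carrier lam_min_symmetric(1)[OF R_mat_carrier R_mat_symmetric N NT] by (rule eigenvalueE)
  define G where "G = (\<lambda>u. \<Sum>k<?N. v $ k * d2K K u $ k)"
  have G: "continuous_on UNIV G"
    unfolding G_def using continuous_on_index_d2K[OF C] by (intro continuous_intros) auto
  have "integrable lborel (\<lambda>u. (G u)\<^sup>2)"
  proof (rule integrable_continuous_vanishing_outside)
    show "(G u)\<^sup>2 = 0" if "u \<notin> cball 0 1" for u
      using index_d2K_eq_0_outside_ball[OF supp _ ] that by (simp add: G_def)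
  qed (use G in \<open>auto intro: continuous_intros\<close>)
  moreover obtain u0 where "G u0 \<noteq> 0"
  proof -
    have "\<not> (\<forall>k<?N. v $ k = 0)"
    proof
      assume "\<forall>k<?N. v $ k = 0"
      then have "v = 0\<^sub>v ?N" using v(1) by (intro eq_vecI) auto
      with v(2) show False ..
    qed
    then obtain u where "(\<Sum>k<?N. v $ k * (indicator (ball 0 1) u * d2K K u $ k)) \<noteq> 0"
      using indep by blast
    moreover have "(\<Sum>k<?N. v $ k * (indicator (ball 0 1) u * d2K K u $ k)) = indicator (ball 0 1) u * G u"
      by (simp add: G_def sum_distrib_left algebra_simps)
    ultimately show ?thesis
      using that by fastforce
  qed
  ultimately have "0 < (\<integral>u. (G u)\<^sup>2 \<partial>lborel)"
    using G by (intro integral_square_pos)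
  also have "\<dots> = lam_min (R_mat K) * (v \<bullet> v)"
    unfolding G_def R_mat_quadratic_form[OF C supp v(1), symmetric] using v(1,3) by simp
  finally show ?thesis
    using scalar_prod_self_pos[OF v(1,2)] by (simp add: zero_less_mult_iff)
qed

section \<open>The matrix \<open>M(x)\<close> and the bound for \<open>\<Sigma>(x)\<close>\<close>

lemma coord_bij: "bij_betw (coord :: nat \<Rightarrow> 'n::finite) {..<CARD('n)} UNIV"
proof -
  have "\<exists>e. bij_betw e {..<CARD('n)} (UNIV :: 'n set)"
    using ex_bij_betw_nat_finite[of "UNIV :: 'n set"] by (simp add: lessThan_atLeast0)
  then show ?thesis
    unfolding coord_def by (rule someI_ex)
qed

lemma sum_coord: "(\<Sum>a<CARD('n::finite). f (coord a :: 'n)) = (\<Sum>\<alpha>\<in>UNIV. f \<alpha>)"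
  using sum.reindex_bij_betw[OF coord_bij, of f] by simp

lemma index_dup_mat_transpose_mult:
  assumes z: "z \<in> carrier_vec (d * d)" and p: "p < vech_dim d"
  shows "(transpose_mat (dup_mat d) *\<^sub>v z) $ p =
    (\<Sum>a<d. \<Sum>b<d. if sort_pair a b = vech_pairs d ! p then z $ (a + d * b) else 0)"
proof -
  have Dt: "transpose_mat (duplication_mat d) \<in> carrier_mat (vech_dim d) (d * d)"
    using duplication_mat_carrier by simp
  have "(transpose_mat (duplication_mat d) *\<^sub>v z) $ p =
      (\<Sum>k<d * d. (\<lambda>a b. if sort_pair a b = vech_pairs d ! p then z $ (a + d * b) else 0) (k mod d) (k div d))"
    unfolding index_mult_mat_vec_sum[OF Dt z p]
  proof (intro sum.cong refl)
    fix k assume "k \<in> {..<d * d}"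
    then have k: "k < d * d" by simp
    have "transpose_mat (duplication_mat d) $$ (p, k) = duplication_mat d $$ (k, p)"
      using k p duplication_mat_carrier[of d] by simp
    then show "transpose_mat (duplication_mat d) $$ (p, k) * z $ k =
      (\<lambda>a b. if sort_pair a b = vech_pairs d ! p then z $ (a + d * b) else 0) (k mod d) (k div d)"
      using k p by (simp add: duplication_mat_def mod_mult_div_eq)
  qed
  also have "\<dots> = (\<Sum>a<d. \<Sum>b<d. (\<lambda>a b. if sort_pair a b = vech_pairs d ! p then z $ (a + d * b) else 0) a b)"
    by (rule sum_lessThan_square_mod_div)
  finally show ?thesis
    by (simp add: dup_mat_eq)
qed

lemma index_kron_vec_to_jvec:
  fixes x y :: "real^'n::finite"
  assumes a: "a < CARD('n)" and b: "b < CARD('n)"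
  shows "kron_vec (to_jvec x) (to_jvec y) $ (a + CARD('n) * b) = vec_nth x (coord b) * vec_nth y (coord a)"
proof -
  have "a + CARD('n) * b < CARD('n) * Suc b" using a by simp
  also have "\<dots> \<le> CARD('n) * CARD('n)" using b by (intro mult_le_mono2) simp
  finally show ?thesis
    using a b by (simp add: kron_vec_def to_jvec_def)
qed

definition m_factor :: "nat \<Rightarrow> (nat \<Rightarrow> real) \<Rightarrow> (nat \<Rightarrow> real^'n::finite) \<Rightarrow> real^'n \<Rightarrow> nat \<Rightarrow> real^'n" where
  "m_factor r lam v gx i = (\<Sum>j\<in>{1..r}. ((v j \<bullet> gx) / (lam i - lam j)) *\<^sub>R v j)"

text \<open>The entries of \<open>B = \<Sum>\<^sub>l y\<^sub>l w\<^sub>r\<^sub>+\<^sub>1\<^sub>+\<^sub>l v\<^sub>r\<^sub>+\<^sub>1\<^sub>+\<^sub>l\<^sup>T\<close>, where \<open>w\<^sub>i = m_factor r lam v gx i\<close>; then \<open>M y = D\<^sup>T vec B\<close>.\<close>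
definition M_outer :: "nat \<Rightarrow> (nat \<Rightarrow> real) \<Rightarrow> (nat \<Rightarrow> real^'n::finite) \<Rightarrow> real^'n \<Rightarrow> real Matrix.vec \<Rightarrow> 'n \<Rightarrow> 'n \<Rightarrow> real" where
  "M_outer r lam v gx y \<alpha> \<beta> =
    (\<Sum>l<CARD('n) - r. y $ l * (vec_nth (v (r + 1 + l)) \<beta> * vec_nth (m_factor r lam v gx (r + 1 + l)) \<alpha>))"

lemma M_mat_carrier: "M_mat r lam v (gx :: real^'n::finite) \<in> carrier_mat (vech_dim CARD('n)) (CARD('n) - r)"
  by (simp add: M_mat_def)

lemma index_M_mat_mult_vec:
  fixes v :: "nat \<Rightarrow> real^'n::finite"
  assumes p: "p < vech_dim CARD('n)" and y: "y \<in> carrier_vec (CARD('n) - r)"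
  shows "(M_mat r lam v gx *\<^sub>v y) $ p = (\<Sum>a<CARD('n). \<Sum>b<CARD('n).
    if sort_pair a b = vech_pairs CARD('n) ! p then M_outer r lam v gx y (coord a) (coord b) else 0)"
proof -
  let ?d = "CARD('n)"
  let ?w = "m_factor r lam v gx"
  have "(M_mat r lam v gx *\<^sub>v y) $ p = (\<Sum>l<?d - r. y $ l * (\<Sum>a<?d. \<Sum>b<?d.
      if sort_pair a b = vech_pairs ?d ! p then vec_nth (v (r + 1 + l)) (coord b) * vec_nth (?w (r + 1 + l)) (coord a) else 0))"
    unfolding index_mult_mat_vec_sum[OF M_mat_carrier y p]
  proof (intro sum.cong refl)
    fix l assume "l \<in> {..<?d - r}"
    have kron: "kron_vec (to_jvec (v (r + 1 + l))) (to_jvec (?w (r + 1 + l))) \<in> carrier_vec (?d * ?d)"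
      by (simp add: kron_vec_def to_jvec_def)
    have "M_mat r lam v gx $$ (p, l) = m_vec r lam v gx (r + 1 + l) $ p"
      using p \<open>l \<in> {..<?d - r}\<close> by (simp add: M_mat_def)
    also have "\<dots> = (\<Sum>a<?d. \<Sum>b<?d. if sort_pair a b = vech_pairs ?d ! p
        then vec_nth (v (r + 1 + l)) (coord b) * vec_nth (?w (r + 1 + l)) (coord a) else 0)"
      unfolding m_vec_def m_factor_def[symmetric] index_dup_mat_transpose_mult[OF kron p]
      by (intro sum.cong refl) (simp add: index_kron_vec_to_jvec)
    finally show "M_mat r lam v gx $$ (p, l) * y $ l = y $ l * (\<Sum>a<?d. \<Sum>b<?d. if sort_pair a b = vech_pairs ?d ! p
        then vec_nth (v (r + 1 + l)) (coord b) * vec_nth (?w (r + 1 + l)) (coord a) else 0)"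
      by simp
  qed
  also have "\<dots> = (\<Sum>a<?d. \<Sum>b<?d. if sort_pair a b = vech_pairs ?d ! p then
      (\<Sum>l<?d - r. y $ l * (vec_nth (v (r + 1 + l)) (coord b) * vec_nth (?w (r + 1 + l)) (coord a))) else 0)"
  proof -
    have "(\<Sum>l<?d - r. y $ l * (\<Sum>a<?d. \<Sum>b<?d.
        if sort_pair a b = vech_pairs ?d ! p then vec_nth (v (r + 1 + l)) (coord b) * vec_nth (?w (r + 1 + l)) (coord a) else 0)) =
      (\<Sum>l<?d - r. \<Sum>a<?d. \<Sum>b<?d. if sort_pair a b = vech_pairs ?d ! p then
        y $ l * (vec_nth (v (r + 1 + l)) (coord b) * vec_nth (?w (r + 1 + l)) (coord a)) else 0)"
      unfolding sum_distrib_left by (intro sum.cong refl) simp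
    also have "\<dots> = (\<Sum>a<?d. \<Sum>b<?d. \<Sum>l<?d - r. if sort_pair a b = vech_pairs ?d ! p then
        y $ l * (vec_nth (v (r + 1 + l)) (coord b) * vec_nth (?w (r + 1 + l)) (coord a)) else 0)"
      by (rule trans[OF sum.swap sum.cong[OF refl sum.swap]])
    also have "\<dots> = (\<Sum>a<?d. \<Sum>b<?d. if sort_pair a b = vech_pairs ?d ! p then
        (\<Sum>l<?d - r. y $ l * (vec_nth (v (r + 1 + l)) (coord b) * vec_nth (?w (r + 1 + l)) (coord a))) else 0)"
      by (intro sum.cong refl) simp
    finally show ?thesis .
  qed
  finally show ?thesis
    unfolding M_outer_def .
qed

lemma sum_sym_part_square_le_dup_transpose:
  fixes G :: "nat \<Rightarrow> nat \<Rightarrow> real"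
  shows "(\<Sum>a<d. \<Sum>b<d. ((G a b + G b a) / 2)\<^sup>2) \<le>
    (\<Sum>p<vech_dim d. (\<Sum>a<d. \<Sum>b<d. if sort_pair a b = vech_pairs d ! p then G a b else 0)\<^sup>2)"
proof -
  let ?T = "\<lambda>a b. ((G a b + G b a) / 2)\<^sup>2"
  have "(\<Sum>a<d. \<Sum>b<d. ?T a b) =
      (\<Sum>a<d. \<Sum>b<d. \<Sum>p<vech_dim d. if sort_pair a b = vech_pairs d ! p then ?T a b else 0)"
    using sum_vech_pairs_delta[of _ d _ "\<lambda>_. ?T _ _"] by (intro sum.cong refl) simp
  also have "\<dots> = (\<Sum>p<vech_dim d. \<Sum>a<d. \<Sum>b<d. if sort_pair a b = vech_pairs d ! p then ?T a b else 0)"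
    by (rule trans[OF sum.cong[OF refl sum.swap] sum.swap])
  also have "\<dots> \<le> (\<Sum>p<vech_dim d. (\<Sum>a<d. \<Sum>b<d. if sort_pair a b = vech_pairs d ! p then G a b else 0)\<^sup>2)"
  proof (rule sum_mono)
    fix p assume "p \<in> {..<vech_dim d}"
    then have p: "p < vech_dim d" by simp
    obtain i j where ij: "vech_pairs d ! p = (i, j)" by fastforce
    note lower = vech_pairs_nth_lower[OF p ij]
    have "(if i = j then ?T i i else ?T i j + ?T j i) \<le> (if i = j then G i i else G i j + G j i)\<^sup>2"
    proof (cases "i = j")
      case False
      have "?T j i = ?T i j" by (simp add: add.commute)
      moreover have "2 * ?T i j \<le> (G i j + G j i)\<^sup>2" by (simp add: power_divide)
      ultimately show ?thesis
        unfolding if_not_P[OF False] by linarith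
    qed simp
    then show "(\<Sum>a<d. \<Sum>b<d. if sort_pair a b = vech_pairs d ! p then ?T a b else 0) \<le>
        (\<Sum>a<d. \<Sum>b<d. if sort_pair a b = vech_pairs d ! p then G a b else 0)\<^sup>2"
      unfolding ij sum_sort_pair_eq[OF lower] .
  qed
  finally show ?thesis .
qed

lemma sum_products_rank_one_sums:
  fixes p q r s :: "'l \<Rightarrow> real^'n::finite" and y :: "'l \<Rightarrow> real"
  assumes "finite L"
  shows "(\<Sum>\<alpha>\<in>UNIV. \<Sum>\<beta>\<in>UNIV. (\<Sum>l\<in>L. y l * (vec_nth (p l) \<alpha> * vec_nth (q l) \<beta>)) *
      (\<Sum>l\<in>L. y l * (vec_nth (r l) \<alpha> * vec_nth (s l) \<beta>))) =
    (\<Sum>l\<in>L. \<Sum>l'\<in>L. y l * y l' * ((p l \<bullet> r l') * (q l \<bullet> s l')))"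
proof -
  have "(\<Sum>\<alpha>\<in>UNIV. \<Sum>\<beta>\<in>UNIV. (\<Sum>l\<in>L. y l * (vec_nth (p l) \<alpha> * vec_nth (q l) \<beta>)) *
      (\<Sum>l\<in>L. y l * (vec_nth (r l) \<alpha> * vec_nth (s l) \<beta>))) =
    (\<Sum>\<alpha>\<in>UNIV. \<Sum>\<beta>\<in>UNIV. \<Sum>l\<in>L. \<Sum>l'\<in>L. y l * y l' * ((vec_nth (p l) \<alpha> * vec_nth (r l') \<alpha>) *
      (vec_nth (q l) \<beta> * vec_nth (s l') \<beta>)))"
    by (simp add: sum_product mult_ac)
  also have "\<dots> = (\<Sum>l\<in>L. \<Sum>l'\<in>L. \<Sum>\<alpha>\<in>UNIV. \<Sum>\<beta>\<in>UNIV. y l * y l' * ((vec_nth (p l) \<alpha> * vec_nth (r l') \<alpha>) *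
      (vec_nth (q l) \<beta> * vec_nth (s l') \<beta>)))"
    by (rule trans[OF sum.cong[OF refl sum.swap] trans[OF sum.cong[OF refl sum.cong[OF refl sum.swap]]
        trans[OF sum.swap sum.cong[OF refl sum.swap]]]])
  also have "\<dots> = (\<Sum>l\<in>L. \<Sum>l'\<in>L. y l * y l' * ((p l \<bullet> r l') * (q l \<bullet> s l')))"
    by (simp only: inner_vec_def inner_real_def sum_product) (simp only: sum_distrib_left)
  finally show ?thesis .
qed

lemma frobenius_sym_part_rank_one_sum:
  fixes v w :: "'l \<Rightarrow> real^'n::finite" and y :: "'l \<Rightarrow> real"
  assumes L: "finite L"
    and orthonormal: "\<And>l l'. l \<in> L \<Longrightarrow> l' \<in> L \<Longrightarrow> v l \<bullet> v l' = (if l = l' then 1 else 0)"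
    and orthogonal: "\<And>l l'. l \<in> L \<Longrightarrow> l' \<in> L \<Longrightarrow> v l \<bullet> w l' = 0"
    and B: "\<And>\<alpha> \<beta>. B \<alpha> \<beta> = (\<Sum>l\<in>L. y l * (vec_nth (v l) \<beta> * vec_nth (w l) \<alpha>))"
  shows "(\<Sum>\<alpha>\<in>UNIV. \<Sum>\<beta>\<in>UNIV. ((B \<alpha> \<beta> + B \<beta> \<alpha>) / 2)\<^sup>2) = (\<Sum>l\<in>L. (y l)\<^sup>2 * (w l \<bullet> w l)) / 2"
proof -
  have B_wv: "B \<alpha> \<beta> = (\<Sum>l\<in>L. y l * (vec_nth (w l) \<alpha> * vec_nth (v l) \<beta>))" for \<alpha> \<beta>
    by (simp add: B mult.commute)
  have square: "(\<Sum>\<alpha>\<in>UNIV. \<Sum>\<beta>\<in>UNIV. B \<alpha> \<beta> * B \<alpha> \<beta>) = (\<Sum>l\<in>L. (y l)\<^sup>2 * (w l \<bullet> w l))"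
  proof -
    have "(\<Sum>\<alpha>\<in>UNIV. \<Sum>\<beta>\<in>UNIV. B \<alpha> \<beta> * B \<alpha> \<beta>) =
        (\<Sum>l\<in>L. \<Sum>l'\<in>L. y l * y l' * ((w l \<bullet> w l') * (v l \<bullet> v l')))"
      unfolding B_wv by (rule sum_products_rank_one_sums[OF L])
    also have "\<dots> = (\<Sum>l\<in>L. \<Sum>l'\<in>L. if l' = l then (y l)\<^sup>2 * (w l \<bullet> w l) else 0)"
      by (intro sum.cong refl) (auto simp: orthonormal power2_eq_square)
    finally show ?thesis
      using L by simp
  qed
  have cross: "(\<Sum>\<alpha>\<in>UNIV. \<Sum>\<beta>\<in>UNIV. B \<alpha> \<beta> * B \<beta> \<alpha>) = 0"
  proof -
    have "(\<Sum>\<alpha>\<in>UNIV. \<Sum>\<beta>\<in>UNIV. B \<alpha> \<beta> * B \<beta> \<alpha>) =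
        (\<Sum>\<alpha>\<in>UNIV. \<Sum>\<beta>\<in>UNIV. (\<Sum>l\<in>L. y l * (vec_nth (w l) \<alpha> * vec_nth (v l) \<beta>)) *
          (\<Sum>l\<in>L. y l * (vec_nth (v l) \<alpha> * vec_nth (w l) \<beta>)))"
      by (simp only: B mult_ac)
    also have "\<dots> = (\<Sum>l\<in>L. \<Sum>l'\<in>L. y l * y l' * ((w l \<bullet> v l') * (v l \<bullet> w l')))"
      by (rule sum_products_rank_one_sums[OF L])
    also have "\<dots> = 0"
      by (intro sum.neutral ballI) (simp add: orthogonal)
    finally show ?thesis .
  qed
  have "(\<Sum>\<alpha>\<in>UNIV. \<Sum>\<beta>\<in>UNIV. ((B \<alpha> \<beta> + B \<beta> \<alpha>) / 2)\<^sup>2) =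
      (\<Sum>\<alpha>\<in>UNIV. \<Sum>\<beta>\<in>UNIV. (B \<alpha> \<beta> * B \<alpha> \<beta>) / 4 + (2 * (B \<alpha> \<beta> * B \<beta> \<alpha>)) / 4 + (B \<beta> \<alpha> * B \<beta> \<alpha>) / 4)"
    by (intro sum.cong refl) (simp add: power2_eq_square field_simps)
  also have "\<dots> = (\<Sum>\<alpha>\<in>UNIV. \<Sum>\<beta>\<in>UNIV. B \<alpha> \<beta> * B \<alpha> \<beta>) / 4 + (2 * (\<Sum>\<alpha>\<in>UNIV. \<Sum>\<beta>\<in>UNIV. B \<alpha> \<beta> * B \<beta> \<alpha>)) / 4
      + (\<Sum>\<alpha>\<in>UNIV. \<Sum>\<beta>\<in>UNIV. B \<beta> \<alpha> * B \<beta> \<alpha>) / 4"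
    by (simp only: sum.distrib sum_divide_distrib sum_distrib_left)
  also have "(\<Sum>\<alpha>\<in>UNIV. \<Sum>\<beta>\<in>UNIV. B \<beta> \<alpha> * B \<beta> \<alpha>) = (\<Sum>\<alpha>\<in>UNIV. \<Sum>\<beta>\<in>UNIV. B \<alpha> \<beta> * B \<alpha> \<beta>)"
    by (rule sum.swap)
  finally show ?thesis
    unfolding square cross by simp
qed

lemma inner_self_sum_orthonormal:
  fixes v :: "'j \<Rightarrow> 'a::real_inner"
  assumes J: "finite J" and orthonormal: "\<And>j k. j \<in> J \<Longrightarrow> k \<in> J \<Longrightarrow> v j \<bullet> v k = (if j = k then 1 else 0)"
  shows "(\<Sum>j\<in>J. c j *\<^sub>R v j) \<bullet> (\<Sum>j\<in>J. c j *\<^sub>R v j) = (\<Sum>j\<in>J. (c j)\<^sup>2)"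
proof -
  have "(\<Sum>j\<in>J. c j *\<^sub>R v j) \<bullet> (\<Sum>j\<in>J. c j *\<^sub>R v j) = (\<Sum>j\<in>J. \<Sum>k\<in>J. c j * c k * (v k \<bullet> v j))"
    by (simp add: inner_sum_left inner_sum_right sum_distrib_left mult.assoc)
  also have "\<dots> = (\<Sum>j\<in>J. \<Sum>k\<in>J. if k = j then (c j)\<^sup>2 else 0)"
    by (intro sum.cong refl) (auto simp: orthonormal power2_eq_square)
  finally show ?thesis
    using J by simp
qed

lemma M_mat_norm_ge:
  fixes v :: "nat \<Rightarrow> real^'n::finite"
  assumes orth: "\<forall>i\<in>{1..CARD('n)}. \<forall>j\<in>{1..CARD('n)}. v i \<bullet> v j = (if i = j then 1 else 0)"
    and y: "y \<in> carrier_vec (CARD('n) - r)"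
  shows "(\<Sum>l<CARD('n) - r. (y $ l)\<^sup>2 * (m_factor r lam v gx (r + 1 + l) \<bullet> m_factor r lam v gx (r + 1 + l))) / 2
    \<le> (M_mat r lam v gx *\<^sub>v y) \<bullet> (M_mat r lam v gx *\<^sub>v y)"
proof -
  let ?d = "CARD('n)"
  let ?B = "M_outer r lam v gx y"
  have orthonormal: "v (r + 1 + l) \<bullet> v (r + 1 + l') = (if l = l' then 1 else 0)"
    if "l \<in> {..<?d - r}" "l' \<in> {..<?d - r}" for l l'
    using orth that by auto
  have orthogonal: "v (r + 1 + l) \<bullet> m_factor r lam v gx (r + 1 + l') = 0" if "l \<in> {..<?d - r}" for l l'
  proof -
    have "v (r + 1 + l) \<bullet> v j = 0" if "j \<in> {1..r}" for j
      using orth \<open>l \<in> {..<?d - r}\<close> that by auto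
    then show ?thesis
      by (simp add: m_factor_def inner_sum_right)
  qed
  have "(\<Sum>l<?d - r. (y $ l)\<^sup>2 * (m_factor r lam v gx (r + 1 + l) \<bullet> m_factor r lam v gx (r + 1 + l))) / 2
      = (\<Sum>\<alpha>\<in>UNIV. \<Sum>\<beta>\<in>UNIV. ((?B \<alpha> \<beta> + ?B \<beta> \<alpha>) / 2)\<^sup>2)"
    by (rule frobenius_sym_part_rank_one_sum[symmetric, OF _ orthonormal orthogonal]) (simp_all add: M_outer_def)
  also have "\<dots> = (\<Sum>a<?d. \<Sum>b<?d. ((?B (coord a) (coord b) + ?B (coord b) (coord a)) / 2)\<^sup>2)"
    by (rule trans[OF sum_coord[symmetric] sum.cong[OF refl sum_coord[symmetric]]])
  also have "\<dots> \<le> (\<Sum>p<vech_dim ?d. (\<Sum>a<?d. \<Sum>b<?d.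
      if sort_pair a b = vech_pairs ?d ! p then ?B (coord a) (coord b) else 0)\<^sup>2)"
    by (rule sum_sym_part_square_le_dup_transpose)
  also have "\<dots> = (\<Sum>p<vech_dim ?d. ((M_mat r lam v gx *\<^sub>v y) $ p)\<^sup>2)"
    by (intro sum.cong refl) (simp add: index_M_mat_mult_vec y)
  also have "\<dots> = (M_mat r lam v gx *\<^sub>v y) \<bullet> (M_mat r lam v gx *\<^sub>v y)"
    using M_mat_carrier[of r lam v gx] y by (intro scalar_prod_self_sum[symmetric]) simp
  finally show ?thesis .
qed

lemma M_mat_norm_ge_Min:
  fixes v :: "nat \<Rightarrow> real^'n::finite"
  assumes orth: "\<forall>i\<in>{1..CARD('n)}. \<forall>j\<in>{1..CARD('n)}. v i \<bullet> v j = (if i = j then 1 else 0)"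
    and r: "r \<le> CARD('n) - 1" and y: "y \<in> carrier_vec (CARD('n) - r)"
  shows "Min ((\<lambda>i. \<Sum>j\<in>{1..r}. ((v j \<bullet> gx) / (lam i - lam j))\<^sup>2) ` {r+1..CARD('n)}) / 2 * (y \<bullet> y)
    \<le> (M_mat r lam v gx *\<^sub>v y) \<bullet> (M_mat r lam v gx *\<^sub>v y)"
proof -
  let ?d = "CARD('n)"
  let ?w = "m_factor r lam v gx"
  define \<mu> where "\<mu> = Min ((\<lambda>i. \<Sum>j\<in>{1..r}. ((v j \<bullet> gx) / (lam i - lam j))\<^sup>2) ` {r+1..?d})"
  have "\<mu> * (y \<bullet> y) = (\<Sum>l<?d - r. (y $ l)\<^sup>2 * \<mu>)"
    by (simp add: scalar_prod_self_sum[OF y] sum_distrib_left mult.commute)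
  also have "\<dots> \<le> (\<Sum>l<?d - r. (y $ l)\<^sup>2 * (?w (r + 1 + l) \<bullet> ?w (r + 1 + l)))"
  proof (intro sum_mono mult_left_mono)
    fix l assume "l \<in> {..<?d - r}"
    then have l: "r + 1 + l \<in> {r+1..?d}" by auto
    have "?w (r + 1 + l) \<bullet> ?w (r + 1 + l) = (\<Sum>j\<in>{1..r}. ((v j \<bullet> gx) / (lam (r + 1 + l) - lam j))\<^sup>2)"
      unfolding m_factor_def using orth r by (intro inner_self_sum_orthonormal) auto
    then show "\<mu> \<le> ?w (r + 1 + l) \<bullet> ?w (r + 1 + l)"
      unfolding \<mu>_def using l by (auto intro: Min_le)
  qed simp
  finally show ?thesis
    using M_mat_norm_ge[OF orth y, of lam gx] unfolding \<mu>_def by simp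
qed

lemma lam_min_Sigma_mat_ge:
  fixes v :: "nat \<Rightarrow> real^'n::finite" and K :: "real^'n \<Rightarrow> real"
  assumes orth: "\<forall>i\<in>{1..CARD('n)}. \<forall>j\<in>{1..CARD('n)}. v i \<bullet> v j = (if i = j then 1 else 0)"
    and r: "1 \<le> r" "r \<le> CARD('n) - 1"
    and R_nonneg: "0 \<le> lam_min (R_mat K)"
  shows "lam_min (R_mat K) * Min ((\<lambda>i. \<Sum>j\<in>{1..r}. ((v j \<bullet> gx) / (lam i - lam j))\<^sup>2) ` {r+1..CARD('n)}) / 2
    \<le> lam_min (Sigma_mat K r lam v gx)"
proof -
  let ?d = "CARD('n)"
  let ?n = "?d - r"
  let ?M = "M_mat r lam v gx"
  let ?R = "R_mat K"
  let ?\<mu> = "Min ((\<lambda>i. \<Sum>j\<in>{1..r}. ((v j \<bullet> gx) / (lam i - lam j))\<^sup>2) ` {r+1..?d})"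
  have M: "?M \<in> carrier_mat (vech_dim ?d) ?n" by (rule M_mat_carrier)
  have R: "?R \<in> carrier_mat (vech_dim ?d) (vech_dim ?d)" by (rule R_mat_carrier)
  have N: "0 < vech_dim ?d" and NT: "vech_dim ?d \<le> CARD('n \<times> 'n)"
    using vech_dim_pos[of ?d] vech_dim_le[of ?d] by simp_all
  have Sigma: "Sigma_mat K r lam v gx \<in> carrier_mat ?n ?n"
    unfolding Sigma_mat_def using M R by (metis mult_carrier_mat transpose_carrier_mat)
  have Sigma_sym: "transpose_mat (Sigma_mat K r lam v gx) = Sigma_mat K r lam v gx"
    unfolding Sigma_mat_def by (rule transpose_congruence_symmetric[OF M R R_mat_symmetric])
  have "(lam_min ?R * ?\<mu> / 2) * (y \<bullet> y) \<le> y \<bullet> (Sigma_mat K r lam v gx *\<^sub>v y)" if y: "y \<in> carrier_vec ?n" for y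
  proof -
    have My: "?M *\<^sub>v y \<in> carrier_vec (vech_dim ?d)" using M y by simp
    have "(lam_min ?R * ?\<mu> / 2) * (y \<bullet> y) \<le> lam_min ?R * ((?M *\<^sub>v y) \<bullet> (?M *\<^sub>v y))"
      using mult_left_mono[OF M_mat_norm_ge_Min[OF orth r(2) y, where gx = gx and lam = lam] R_nonneg] by simp
    also have "\<dots> \<le> (?M *\<^sub>v y) \<bullet> (?R *\<^sub>v (?M *\<^sub>v y))"
      by (rule lam_min_symmetric(2)[OF R R_mat_symmetric N NT My])
    also have "\<dots> = y \<bullet> (Sigma_mat K r lam v gx *\<^sub>v y)"
      unfolding Sigma_mat_def by (rule quadratic_form_congruence[OF M R y, symmetric])
    finally show ?thesis .
  qed
  moreover have "0 < ?n" and "?n \<le> CARD('n)" using r by simp_all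
  ultimately show ?thesis
    by (intro lam_min_ge_of_quadratic_form_ge[OF Sigma] lam_min_symmetric(1)[OF Sigma Sigma_sym])
qed

theorem mainTheorem15:
  fixes f :: "real^'n::finite \<Rightarrow> real" and g :: "real^'n \<Rightarrow> real^'n"
    and H :: "real^'n \<Rightarrow> real^'n^'n" and K :: "real^'n \<Rightarrow> real"
    and r :: nat and x :: "real^'n" and lam :: "nat \<Rightarrow> real" and v :: "nat \<Rightarrow> real^'n"
  assumes d: "CARD('n) \<ge> 2" and r: "1 \<le> r" "r \<le> CARD('n) - 1"
    and f_dens: "\<forall>y. 0 \<le> f y" "(f has_integral 1) UNIV"
    and f_grad: "\<forall>y. (f has_derivative (\<lambda>h. g y \<bullet> h)) (at y)"
    and f_hess: "\<forall>y. (g has_derivative (\<lambda>h. H y *v h)) (at y)"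
    and eig: "\<forall>i\<in>{1..CARD('n)}. H x *v v i = lam i *\<^sub>R v i"
    and orth: "\<forall>i\<in>{1..CARD('n)}. \<forall>j\<in>{1..CARD('n)}. v i \<bullet> v j = (if i = j then 1 else 0)"
    and ord: "\<forall>i\<in>{1..CARD('n)}. \<forall>j\<in>{1..CARD('n)}. i \<le> j \<longrightarrow> lam j \<le> lam i"
    and K1: "\<forall>u. 0 \<le> K u" "(K has_integral 1) UNIV"
      "\<forall>u w. norm u = norm w \<longrightarrow> K u = K w"
      "\<forall>u. 1 < norm u \<longrightarrow> K u = 0"
      "Ck 4 K"
    and K2: "\<forall>c \<rho>. 0 < \<rho> \<and> ball c \<rho> \<subseteq> cball 0 1 \<longrightarrow>
      (\<forall>a :: nat \<Rightarrow> real.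
         (\<forall>u. (\<Sum>k < CARD('n) * (CARD('n) + 1) div 2.
                 a k * (indicator (ball c \<rho>) u * vec_index (d2K K u) k)) = 0)
         \<longrightarrow> (\<forall>k < CARD('n) * (CARD('n) + 1) div 2. a k = 0))"
    and gap: "\<forall>i\<in>{r+1..CARD('n)}. \<forall>j\<in>{1..r}. lam i \<noteq> lam j"
  shows "lam_min (Sigma_mat K r lam v (g x)) \<ge>
           lam_min (R_mat K)
             / (2 * lam_max (pinv (dup_mat CARD('n)) * transpose_mat (pinv (dup_mat CARD('n)))))
             * Min ((\<lambda>i. \<Sum>j\<in>{1..r}. ((v j \<bullet> g x) / (lam i - lam j))\<^sup>2) ` {r+1..CARD('n)})
         \<and> 0 < lam_min (R_mat K)"
proof -
  \<comment> \<open>Only the orthonormality of the \<open>v\<^sub>i\<close>, the support and smoothness of \<open>K\<close> and (K2) are used.\<close>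
  let ?\<mu> = "Min ((\<lambda>i. \<Sum>j\<in>{1..r}. ((v j \<bullet> g x) / (lam i - lam j))\<^sup>2) ` {r+1..CARD('n)})"
  let ?P = "pinv (dup_mat CARD('n)) * transpose_mat (pinv (dup_mat CARD('n)))"
  have "\<forall>a :: nat \<Rightarrow> real.
      (\<forall>u. (\<Sum>k<vech_dim CARD('n). a k * (indicator (ball 0 1) u * d2K K u $ k)) = 0)
        \<longrightarrow> (\<forall>k<vech_dim CARD('n). a k = 0)"
    using K2[THEN spec[of _ 0], THEN spec[of _ 1]] by simp
  then have R_pos: "0 < lam_min (R_mat K)"
    by (rule lam_min_R_mat_pos[OF K1(5) K1(4)])
  have P: "1 \<le> lam_max ?P"
    by (rule lam_max_pinv_dup_gram_ge_1) simp
  have \<mu>: "0 \<le> ?\<mu>"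
    using r by (auto simp: Min_ge_iff intro!: sum_nonneg)
  have "lam_min (R_mat K) / (2 * lam_max ?P) * ?\<mu> \<le> lam_min (R_mat K) / 2 * ?\<mu>"
    using P R_pos \<mu> by (intro mult_right_mono divide_left_mono) auto
  also have "\<dots> \<le> lam_min (Sigma_mat K r lam v (g x))"
    using lam_min_Sigma_mat_ge[OF orth r] R_pos by simp
  finally show ?thesis
    using R_pos by simp
qed

end
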